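(* Let $\boldsymbol{\alpha}=(\alpha_1,\dots,\alpha_d)\in\mathbb{R}^d$ be such that $1,\alpha_1,\ldots,\alpha_d$ form a $\mathbb{Q}$-basis for an algebraic number field $K\subseteq\mathbb{R}$, let $\Lambda=\mathbb{Z}+\alpha_1\mathbb{Z}+\cdots+\alpha_d\mathbb{Z}$, and let $s\in\Lambda^*$. For $u\in\mathcal{Z}_\Lambda^\times$ define $q_u=\mathrm{Tr}(su)\in\mathbb{Z}$ and $\boldsymbol{p}_u\in\mathbb{Z}^d$ by $p_{u,i}=\mathrm{Tr}(su\alpha_i)$ for $1\le i\le d$. Then there is an invertible real $d\times d$ matrix $M(\boldsymbol{\alpha})$, depending only on $\boldsymbol{\alpha}$, such that for each $u\in\mathcal{Z}_\Lambda^\times$ there exist $\gamma_u\in\mathbb{R}$ and $\boldsymbol{\beta}_u\in\mathbb{R}^d$ with \[|q_u|^{1/d}(q_u\boldsymbol{\alpha}-\boldsymbol{p}_u)=\gamma_u\boldsymbol{\beta}_uM(\boldsymbol{\alpha}),\] where $\boldsymbol{\beta}_u$ (a row vector) lies on the surface in $\mathbb{R}^d$ with equation \[|x_1\cdots x_r|\prod_{i=1}^m\left(x_{r+2i-1}^2+x_{r+2i}^2\right)=1,\] and where $\gamma_u\to|\mathrm{N}(s)|^{1/d}$ as $u$ tends to infinity along any sequence of dominant units.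
   Context: $[K:\mathbb{Q}]=d+1$; $K$ has $r+1$ real embeddings $\sigma_0=\mathrm{id},\sigma_1,\dots,\sigma_r$ and $2m$ non-real embeddings $\sigma_{r+1},\dots,\sigma_d$ with $\sigma_{r+i}=\overline{\sigma_{r+m+i}}$ ($1\le i\le m$), so $d=r+2m$. $\mathrm{N},\mathrm{Tr}$ are norm and trace $K\to\mathbb{Q}$. $\Lambda^*=\{x\in K:\mathrm{Tr}(xy)\in\mathbb{Z}\ \forall y\in\Lambda\}$ is the dual lattice with respect to the trace form. $\mathcal{O}_K$ is the ring of integers, $\mathcal{Z}_\Lambda=\{\gamma\in\mathcal{O}_K:\gamma\Lambda\subseteq\Lambda\}$ with unit group $\mathcal{Z}_\Lambda^\times$. The logarithmic embedding $\varphi(x)=(\log|\sigma_0(x)|,\dots,\log|\sigma_{r+m}(x)|)$ maps $\mathcal{Z}_\Lambda^\times$ onto a lattice in the hyperplane $x_0+\cdots+x_r+2x_{r+1}+\cdots+2x_{r+m}=0$ of $\mathbb{R}^{r+m+1}$; $\kappa_\Lambda>1$ is the infimum of all $\kappa>1$ such that every closed cube of side $\log\kappa$ centered on this hyperplane contains a point of $\varphi(\mathcal{Z}_\Lambda^\times)$. A dominant unit is $u\in\mathcal{Z}_\Lambda^\times$ such that for some $t>1$, $t\le|u|\le\kappa_\Lambda t$ and $t^{-1/d}\le|\sigma_i(u)|\le\kappa_\Lambda t^{-1/d}$ for $1\le i\le d$; "$u$ tends to infinity" means $|u|\to\infty$. *)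

theory Defs
  imports Complex_Main "HOL-Computational_Algebra.Polynomial" "Jordan_Normal_Form.Matrix"
begin

definition nf_K :: "nat \<Rightarrow> (nat \<Rightarrow> real) \<Rightarrow> real set" where
  "nf_K d \<alpha> = {x. \<exists>q :: nat \<Rightarrow> rat. x = of_rat (q 0) + (\<Sum>i=1..d. of_rat (q i) * \<alpha> i)}"

definition nf_basis :: "nat \<Rightarrow> (nat \<Rightarrow> real) \<Rightarrow> bool" where
  "nf_basis d \<alpha> \<longleftrightarrow>
     (\<forall>q :: nat \<Rightarrow> rat. of_rat (q 0) + (\<Sum>i=1..d. of_rat (q i) * \<alpha> i) = (0::real)
          \<longrightarrow> (\<forall>i\<le>d. q i = 0))
   \<and> (\<forall>x\<in>nf_K d \<alpha>. \<forall>y\<in>nf_K d \<alpha>. x * y \<in> nf_K d \<alpha>)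
   \<and> (\<forall>x\<in>nf_K d \<alpha>. inverse x \<in> nf_K d \<alpha>)"

text \<open>Field embeddings K -> C (extended by 0 outside K so that they form a finite set).\<close>

definition nf_embs :: "real set \<Rightarrow> (real \<Rightarrow> complex) set" where
  "nf_embs K = {\<sigma>. (\<forall>x\<in>K. \<forall>y\<in>K. \<sigma> (x + y) = \<sigma> x + \<sigma> y \<and> \<sigma> (x * y) = \<sigma> x * \<sigma> y)
                  \<and> \<sigma> 1 = 1 \<and> (\<forall>x. x \<notin> K \<longrightarrow> \<sigma> x = 0)}"

definition nf_real_embs :: "real set \<Rightarrow> (real \<Rightarrow> complex) set" where
  "nf_real_embs K = {\<sigma>\<in>nf_embs K. \<forall>x\<in>K. Im (\<sigma> x) = 0}"

definition nf_nonreal_embs :: "real set \<Rightarrow> (real \<Rightarrow> complex) set" where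
  "nf_nonreal_embs K = nf_embs K - nf_real_embs K"

definition nf_id_emb :: "real set \<Rightarrow> real \<Rightarrow> complex" where
  "nf_id_emb K = (\<lambda>x. if x \<in> K then complex_of_real x else 0)"

definition nf_trace :: "real set \<Rightarrow> real \<Rightarrow> real" where
  "nf_trace K x = Re (\<Sum>\<sigma>\<in>nf_embs K. \<sigma> x)"

definition nf_norm :: "real set \<Rightarrow> real \<Rightarrow> real" where
  "nf_norm K x = Re (\<Prod>\<sigma>\<in>nf_embs K. \<sigma> x)"

definition nf_lattice :: "nat \<Rightarrow> (nat \<Rightarrow> real) \<Rightarrow> real set" where
  "nf_lattice d \<alpha> = {x. \<exists>a :: nat \<Rightarrow> int. x = of_int (a 0) + (\<Sum>i=1..d. of_int (a i) * \<alpha> i)}"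

definition nf_dual :: "real set \<Rightarrow> real set \<Rightarrow> real set" where
  "nf_dual K \<Lambda> = {x\<in>K. \<forall>y\<in>\<Lambda>. nf_trace K (x * y) \<in> \<int>}"

definition coeff_ring :: "real set \<Rightarrow> real set \<Rightarrow> real set" where
  "coeff_ring K \<Lambda> = {g\<in>K. algebraic_int g \<and> (\<forall>l\<in>\<Lambda>. g * l \<in> \<Lambda>)}"

definition coeff_units :: "real set \<Rightarrow> real set \<Rightarrow> real set" where
  "coeff_units K \<Lambda> = {u\<in>coeff_ring K \<Lambda>. \<exists>v\<in>coeff_ring K \<Lambda>. u * v = 1}"

text \<open>Cube covering property of the logarithmic embedding.  A point of the hyperplane
  x_0+...+x_r+2x_{r+1}+...+2x_{r+m}=0 is encoded as a function c on all embeddings which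
  is constant on complex-conjugate pairs, with sum over all embeddings 0 (a pair contributes
  2 x_j).  Coordinates of phi(u) are log|sigma(u)|.\<close>
definition cube_cover :: "real set \<Rightarrow> real set \<Rightarrow> real \<Rightarrow> bool" where
  "cube_cover K \<Lambda> \<kappa> \<longleftrightarrow>
     (\<forall>c :: (real \<Rightarrow> complex) \<Rightarrow> real.
        (\<forall>\<sigma>\<in>nf_embs K. c (\<lambda>x. cnj (\<sigma> x)) = c \<sigma>) \<and> (\<Sum>\<sigma>\<in>nf_embs K. c \<sigma>) = 0 \<longrightarrow>
        (\<exists>u\<in>coeff_units K \<Lambda>. \<forall>\<sigma>\<in>nf_embs K. \<bar>ln (cmod (\<sigma> u)) - c \<sigma>\<bar> \<le> ln \<kappa> / 2))"

definition kappa :: "real set \<Rightarrow> real set \<Rightarrow> real" where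
  "kappa K \<Lambda> = Inf {\<kappa>. \<kappa> > 1 \<and> cube_cover K \<Lambda> \<kappa>}"

definition dominant_unit :: "nat \<Rightarrow> real set \<Rightarrow> real set \<Rightarrow> real \<Rightarrow> bool" where
  "dominant_unit d K \<Lambda> u \<longleftrightarrow> u \<in> coeff_units K \<Lambda> \<and>
     (\<exists>t>1. t \<le> \<bar>u\<bar> \<and> \<bar>u\<bar> \<le> kappa K \<Lambda> * t \<and>
        (\<forall>\<sigma>\<in>nf_embs K - {nf_id_emb K}.
           t powr (- 1 / real d) \<le> cmod (\<sigma> u) \<and> cmod (\<sigma> u) \<le> kappa K \<Lambda> * t powr (- 1 / real d)))"

text \<open>The surface |x_1...x_r| prod_{i=1}^m (x_{r+2i-1}^2 + x_{r+2i}^2) = 1 (0-based vector).\<close>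
definition on_surface :: "nat \<Rightarrow> nat \<Rightarrow> real vec \<Rightarrow> bool" where
  "on_surface r m x \<longleftrightarrow>
     \<bar>\<Prod>j<r. x $ j\<bar> * (\<Prod>i<m. (x $ (r + 2*i))\<^sup>2 + (x $ (r + 2*i + 1))\<^sup>2) = 1"

end

theory Submission
  imports Defs "Jordan_Normal_Form.Char_Poly"
begin

text \<open>The linear forms y \<mapsto> Tr(y) \<alpha>_i - Tr(y \<alpha>_i) are combinations of the real coordinates of
  the conjugates \<sigma>(y), \<sigma> \<noteq> id (the real conjugates, and real and imaginary parts of one member of
  each complex pair); the coefficient matrix M is invertible because the d + 1 embeddings are
  linearly independent (Dedekind). For y = s u the coordinate vector has surface value
  \<Prod>_{\<sigma> \<noteq> id} |\<sigma>(s u)|, so rescaling it puts it on the surface and leaves the factor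
  \<gamma>_u = (|Tr(s u)| \<Prod>_{\<sigma> \<noteq> id} |\<sigma>(s u)|)^(1/d). As N(u) = \<plusminus>1 this is
  (|Tr(s u)/u| \<Prod>_{\<sigma> \<noteq> id} |\<sigma>(s)|)^(1/d), and along dominant units the conjugates \<sigma>(u),
  \<sigma> \<noteq> id, stay below \<kappa>, so Tr(s u)/u \<longrightarrow> s and \<gamma>_u \<longrightarrow> |N(s)|^(1/d).

  That there are d + 1 embeddings at all is shown by simultaneous eigenvectors of the
  multiplication matrices: their eigenvalues form embeddings, and the nondegeneracy of the trace
  form prevents such an eigenvector from annihilating all embeddings.\<close>

lemma homogeneous_system_nontrivial_solution:
  fixes f :: "nat \<Rightarrow> nat \<Rightarrow> 'a::field"
  assumes "n < k"
  shows "\<exists>a. (\<exists>j<k. a j \<noteq> 0) \<and> (\<forall>i<n. (\<Sum>j<k. a j * f j i) = 0)"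
proof -
  define B where "B = mat k k (\<lambda>(i,j). if i < n then f j i else 0)"
  have B: "B \<in> carrier_mat k k" unfolding B_def by simp
  have "B = mat\<^sub>r k k (\<lambda>i. if i = k - 1 then 0\<^sub>v k else row B i)"
    by (rule eq_matI) (use assms in \<open>auto simp: B_def\<close>)
  also have "det \<dots> = 0"
    by (rule det_row_0) (use assms in \<open>auto simp: B_def\<close>)
  finally obtain v where v: "v \<in> carrier_vec k" "v \<noteq> 0\<^sub>v k" "B *\<^sub>v v = 0\<^sub>v k"
    using det_0_iff_vec_prod_zero_field[OF B] by blast
  have "\<exists>j<k. v $ j \<noteq> 0"
    using v(1,2) by (metis eq_vecI carrier_vecD index_zero_vec)
  moreover have "(\<Sum>j<k. v $ j * f j i) = 0" if "i < n" for i
  proof -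
    have "(B *\<^sub>v v) $ i = 0" using v(3) that assms by simp
    thus ?thesis
      using that assms v(1) by (simp add: B_def scalar_prod_def atLeast0LessThan mult.commute)
  qed
  ultimately show ?thesis by blast
qed

lemma sum_lessThan_add_double:
  fixes F :: "nat \<Rightarrow> 'a::comm_monoid_add"
  shows "(\<Sum>j<r + 2*m. F j) = (\<Sum>j<r. F j) + (\<Sum>i<m. F (r + 2*i) + F (r + 2*i + 1))"
  by (induction m) (auto simp: add.assoc)

lemma Im_of_rat [simp]: "Im (of_rat c) = 0"
  by (cases c) (simp add: of_rat_rat)

lemma rat_matrix_left_kernel_complex:
  fixes G :: "nat \<Rightarrow> nat \<Rightarrow> rat"
  assumes rat_kernel: "\<And>a. \<forall>m<n. (\<Sum>j<n. a j * G j m) = 0 \<Longrightarrow> \<forall>j<n. a j = 0"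
    and c: "\<forall>m<n. (\<Sum>j<n. c j * of_rat (G j m)) = (0::complex)"
  shows "\<forall>j<n. c j = 0"
proof -
  define Gq where "Gq = mat n n (\<lambda>(j,m). G j m)"
  have Gq: "Gq \<in> carrier_mat n n" "transpose_mat Gq \<in> carrier_mat n n" unfolding Gq_def by auto
  have "det (transpose_mat Gq) \<noteq> 0"
  proof
    assume "det (transpose_mat Gq) = 0"
    then obtain a where a: "a \<in> carrier_vec n" "a \<noteq> 0\<^sub>v n" "transpose_mat Gq *\<^sub>v a = 0\<^sub>v n"
      using det_0_iff_vec_prod_zero_field[OF Gq(2)] by auto
    have "(\<Sum>j<n. a $ j * G j m) = 0" if "m < n" for m
      using arg_cong[OF a(3), of "\<lambda>v. v $ m"] that a(1)
      by (simp add: Gq_def scalar_prod_def atLeast0LessThan mult.commute)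
    hence "a = 0\<^sub>v n" using rat_kernel[of "\<lambda>j. a $ j"] a(1) by (intro eq_vecI) auto
    thus False using a(2) by simp
  qed
  hence "det (map_mat (of_rat :: rat \<Rightarrow> complex) (transpose_mat Gq)) \<noteq> 0" by simp
  moreover define cv where "cv = vec n c"
  have "map_mat of_rat (transpose_mat Gq) *\<^sub>v cv = 0\<^sub>v n"
    using c by (intro eq_vecI) (auto simp: Gq_def cv_def scalar_prod_def atLeast0LessThan mult.commute)
  moreover have "cv \<in> carrier_vec n" unfolding cv_def by simp
  ultimately have "cv = 0\<^sub>v n"
    using det_0_iff_vec_prod_zero_field[of "map_mat of_rat (transpose_mat Gq)" n] Gq(2) by auto
  thus ?thesis unfolding cv_def by (metis index_vec index_zero_vec(1))
qed

definition row_mult :: "nat \<Rightarrow> (nat \<Rightarrow> nat \<Rightarrow> 'a) \<Rightarrow> (nat \<Rightarrow> 'a) \<Rightarrow> nat \<Rightarrow> 'a::comm_ring_1" where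
  "row_mult n T v = (\<lambda>k. if k < n then (\<Sum>i<n. v i * T i k) else 0)"

lemma row_mult_add: "row_mult n T (\<lambda>k. u k + v k) = (\<lambda>k. row_mult n T u k + row_mult n T v k)"
  unfolding row_mult_def by (auto simp: sum.distrib distrib_right)

lemma row_mult_scale: "row_mult n T (\<lambda>k. c * v k) = (\<lambda>k. c * row_mult n T v k)"
  unfolding row_mult_def by (auto simp: sum_distrib_left mult.assoc)

lemma row_mult_sum: "row_mult n T (\<lambda>k. \<Sum>j\<in>J. f j k) = (\<lambda>k. \<Sum>j\<in>J. row_mult n T (f j) k)"
  unfolding row_mult_def sum_distrib_right by (rule ext) (simp add: sum.swap[of _ "{..<n}"])

definition poly_apply :: "nat \<Rightarrow> (nat \<Rightarrow> nat \<Rightarrow> 'a) \<Rightarrow> 'a poly \<Rightarrow> (nat \<Rightarrow> 'a) \<Rightarrow> nat \<Rightarrow> 'a::comm_ring_1" where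
  "poly_apply n T p u = (\<lambda>k. \<Sum>j\<le>degree p. coeff p j * (row_mult n T ^^ j) u k)"

lemma poly_apply_degree_le:
  "degree p \<le> D \<Longrightarrow> poly_apply n T p u = (\<lambda>k. \<Sum>j\<le>D. coeff p j * (row_mult n T ^^ j) u k)"
  unfolding poly_apply_def by (intro ext sum.mono_neutral_left) (auto simp: coeff_eq_0)

lemma poly_apply_add: "poly_apply n T (p + q) u = (\<lambda>k. poly_apply n T p u k + poly_apply n T q u k)"
proof -
  let ?D = "max (degree p) (degree q)"
  have "degree (p + q) \<le> ?D" by (rule degree_add_le_max)
  thus ?thesis
    using poly_apply_degree_le[of "p + q" ?D] poly_apply_degree_le[of p ?D] poly_apply_degree_le[of q ?D]
    by (simp add: sum.distrib distrib_right)
qed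

lemma poly_apply_smult: "poly_apply n T (Polynomial.smult c p) u = (\<lambda>k. c * poly_apply n T p u k)"
  using poly_apply_degree_le[of "Polynomial.smult c p" "degree p"] poly_apply_degree_le[of p "degree p"]
  by (simp add: degree_smult_le sum_distrib_left mult.assoc)

lemma poly_apply_pCons_0: "poly_apply n T (pCons 0 p) u = row_mult n T (poly_apply n T p u)"
proof -
  have "poly_apply n T (pCons 0 p) u
      = (\<lambda>k. \<Sum>j\<le>Suc (degree p). coeff (pCons 0 p) j * (row_mult n T ^^ j) u k)"
    by (rule poly_apply_degree_le) (rule degree_pCons_le)
  also have "\<dots> = (\<lambda>k. \<Sum>j\<le>degree p. coeff p j * (row_mult n T ^^ Suc j) u k)"
    by (subst sum.atMost_Suc_shift) simp
  finally show ?thesis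
    unfolding poly_apply_def row_mult_sum row_mult_scale by simp
qed

lemma poly_apply_linear_factor:
  "poly_apply n T ([:-z, 1:] * p) u = (\<lambda>k. row_mult n T (poly_apply n T p u) k - z * poly_apply n T p u k)"
proof -
  have "[:-z, 1:] * p = pCons 0 p + Polynomial.smult (-z) p" by (simp add: mult_pCons_left)
  thus ?thesis by (simp only: poly_apply_add poly_apply_smult poly_apply_pCons_0) simp
qed

lemma poly_apply_1: "poly_apply n T 1 u = u"
  unfolding poly_apply_def by simp

locale row_mult_invariant_subspace =
  fixes n :: nat and T :: "nat \<Rightarrow> nat \<Rightarrow> complex" and W :: "(nat \<Rightarrow> complex) \<Rightarrow> bool"
  assumes W_add: "\<And>u v. W u \<Longrightarrow> W v \<Longrightarrow> W (\<lambda>k. u k + v k)"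
    and W_scale: "\<And>c v. W v \<Longrightarrow> W (\<lambda>k. c * v k)"
    and W_row_mult: "\<And>v. W v \<Longrightarrow> W (row_mult n T v)"
    and W_support: "\<And>v k. W v \<Longrightarrow> n \<le> k \<Longrightarrow> v k = 0"
begin

lemma W_row_mult_power: "W u \<Longrightarrow> W ((row_mult n T ^^ j) u)"
  by (induction j) (auto intro: W_row_mult)

lemma W_poly_apply:
  assumes "W u"
  shows "W (poly_apply n T p u)"
proof -
  have W0: "W (\<lambda>_. 0)" using W_scale[OF assms, of 0] by simp
  have "W (\<lambda>k. \<Sum>j\<in>J. coeff p j * (row_mult n T ^^ j) u k)" if "finite J" for J
    using that
  proof (induction J rule: finite_induct)
    case (insert j J)
    thus ?case using W_add[OF W_scale[OF W_row_mult_power[OF assms]] insert.IH] by simp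
  qed (simp add: W0)
  thus ?thesis unfolding poly_apply_def by simp
qed

lemma eigenvector_if_annihilated_by_factors:
  assumes "W u" "u \<noteq> (\<lambda>_. 0)" "poly_apply n T (\<Prod>a\<leftarrow>as. [:- a, 1:]) u = (\<lambda>_. 0)"
  shows "\<exists>v \<mu>. W v \<and> v \<noteq> (\<lambda>_. 0) \<and> row_mult n T v = (\<lambda>k. \<mu> * v k)"
  using assms
proof (induction as)
  case Nil thus ?case by (simp add: poly_apply_1)
next
  case (Cons a as)
  let ?v = "poly_apply n T (\<Prod>a\<leftarrow>as. [:- a, 1:]) u"
  show ?case
  proof (cases "?v = (\<lambda>_. 0)")
    case True thus ?thesis using Cons by blast
  next
    case False
    have "poly_apply n T ([:- a, 1:] * (\<Prod>a\<leftarrow>as. [:- a, 1:])) u = (\<lambda>_. 0)"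
      using Cons.prems(3) by simp
    hence "(\<lambda>k. row_mult n T ?v k - a * ?v k) = (\<lambda>_. 0)"
      by (simp only: poly_apply_linear_factor)
    hence "row_mult n T ?v = (\<lambda>k. a * ?v k)" by (simp add: fun_eq_iff)
    thus ?thesis using W_poly_apply[OF Cons.prems(1)] False by blast
  qed
qed

text \<open>The n+1 vectors w, wT, ..., wT^n are linearly dependent because they live in an
  n-dimensional space; this dependence is a nonzero polynomial annihilating w, and one of its
  linear factors then has a nonzero kernel inside W.\<close>

lemma annihilating_poly_exists:
  assumes "W w"
  shows "\<exists>p. p \<noteq> 0 \<and> poly_apply n T p w = (\<lambda>_. 0)"
proof -
  define krylov where "krylov j = (row_mult n T ^^ j) w" for j
  obtain a where a: "\<exists>j<Suc n. a j \<noteq> 0" "\<forall>i<n. (\<Sum>j<Suc n. a j * krylov j i) = 0"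
    using homogeneous_system_nontrivial_solution[of n "Suc n" krylov] by auto
  define p where "p = (\<Sum>j<Suc n. monom (a j) j)"
  have coeff_p: "coeff p j = (if j < Suc n then a j else 0)" for j
    unfolding p_def by (simp add: coeff_sum)
  have "degree p \<le> n" by (rule degree_le) (auto simp: coeff_p)
  hence "poly_apply n T p w = (\<lambda>k. \<Sum>j<Suc n. a j * krylov j k)"
    by (auto simp: poly_apply_degree_le krylov_def coeff_p lessThan_Suc_atMost intro!: sum.cong)
  also have "\<dots> = (\<lambda>_. 0)"
  proof
    fix k
    have "krylov j k = 0" if "n \<le> k" for j
      unfolding krylov_def using W_support[OF W_row_mult_power[OF assms] that] .
    thus "(\<Sum>j<Suc n. a j * krylov j k) = 0" using a(2) by (cases "k < n") auto
  qed
  finally show ?thesis using a(1) coeff_p by (metis coeff_0)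
qed

lemma eigenvector_exists:
  assumes "W w" "w \<noteq> (\<lambda>_. 0)"
  shows "\<exists>v \<mu>. W v \<and> v \<noteq> (\<lambda>_. 0) \<and> row_mult n T v = (\<lambda>k. \<mu> * v k)"
proof -
  obtain p where p: "p \<noteq> 0" "poly_apply n T p w = (\<lambda>_. 0)"
    using annihilating_poly_exists[OF assms(1)] by blast
  obtain as where as: "Polynomial.smult (lead_coeff p) (\<Prod>a\<leftarrow>as. [:- a, 1:]) = p"
    using fundamental_theorem_algebra_factorized[of p] by blast
  have "(\<lambda>k. lead_coeff p * poly_apply n T (\<Prod>a\<leftarrow>as. [:- a, 1:]) w k) = (\<lambda>_. 0)"
    using p(2) as poly_apply_smult by metis
  hence "poly_apply n T (\<Prod>a\<leftarrow>as. [:- a, 1:]) w = (\<lambda>_. 0)" using p(1) by (simp add: fun_eq_iff)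
  thus ?thesis using eigenvector_if_annihilated_by_factors assms by blast
qed

end

definition surface_value :: "nat \<Rightarrow> nat \<Rightarrow> real vec \<Rightarrow> real" where
  "surface_value r m x = \<bar>\<Prod>j<r. x $ j\<bar> * (\<Prod>i<m. (x $ (r + 2*i))\<^sup>2 + (x $ (r + 2*i + 1))\<^sup>2)"

lemma on_surface_iff: "on_surface r m x \<longleftrightarrow> surface_value r m x = 1"
  unfolding on_surface_def surface_value_def ..

lemma surface_value_scale:
  assumes x: "x \<in> carrier_vec (r + 2 * m)" and c: "c \<ge> 0"
  shows "surface_value r m (c \<cdot>\<^sub>v x) = c ^ (r + 2 * m) * surface_value r m x"
proof -
  have "\<bar>\<Prod>j<r. (c \<cdot>\<^sub>v x) $ j\<bar> = \<bar>\<Prod>j<r. c * x $ j\<bar>"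
    using x by (intro arg_cong[of _ _ abs] prod.cong) auto
  also have "\<dots> = c ^ r * \<bar>\<Prod>j<r. x $ j\<bar>"
    using c by (simp add: prod.distrib abs_mult)
  finally have real_part: "\<bar>\<Prod>j<r. (c \<cdot>\<^sub>v x) $ j\<bar> = c ^ r * \<bar>\<Prod>j<r. x $ j\<bar>" .
  have "(\<Prod>i<m. ((c \<cdot>\<^sub>v x) $ (r + 2*i))\<^sup>2 + ((c \<cdot>\<^sub>v x) $ (r + 2*i + 1))\<^sup>2)
      = (\<Prod>i<m. c\<^sup>2 * ((x $ (r + 2*i))\<^sup>2 + (x $ (r + 2*i + 1))\<^sup>2))"
    using x by (intro prod.cong) (auto simp: power_mult_distrib algebra_simps)
  also have "\<dots> = c ^ (2 * m) * (\<Prod>i<m. (x $ (r + 2*i))\<^sup>2 + (x $ (r + 2*i + 1))\<^sup>2)"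
    by (simp add: prod.distrib power_mult)
  finally show ?thesis
    unfolding surface_value_def real_part by (simp add: power_add algebra_simps)
qed

lemma on_surface_normalize:
  assumes x: "x \<in> carrier_vec (r + 2 * m)" and pos: "surface_value r m x > 0"
  shows "on_surface r m ((1 / surface_value r m x powr (1 / real (r + 2 * m))) \<cdot>\<^sub>v x)"
proof (cases "r + 2 * m = 0")
  case True
  thus ?thesis by (simp add: on_surface_def)
next
  case False
  let ?S = "surface_value r m x"
  have "(?S powr (1 / real (r + 2 * m))) ^ (r + 2 * m) = ?S powr (1 / real (r + 2 * m) * real (r + 2 * m))"
    using pos by (simp add: powr_realpow[symmetric] powr_powr del: of_nat_add)
  also have "1 / real (r + 2 * m) * real (r + 2 * m) = 1" using False by (simp del: of_nat_add)
  also have "?S powr 1 = ?S" using pos by simp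
  finally have "(?S powr (1 / real (r + 2 * m))) ^ (r + 2 * m) = ?S" .
  hence "(1 / ?S powr (1 / real (r + 2 * m))) ^ (r + 2 * m) * ?S = 1"
    using pos by (simp add: power_divide)
  thus ?thesis
    unfolding on_surface_iff by (subst surface_value_scale[OF x]) auto
qed

lemma on_surface_exists: "on_surface r m (vec (r + 2 * m) (\<lambda>j. if j < r \<or> even (j - r) then 1 else 0))"
  unfolding on_surface_def by (auto intro!: prod.neutral)

section \<open>Embeddings of the number field\<close>

locale real_number_field =
  fixes d :: nat and \<alpha> :: "nat \<Rightarrow> real"
  assumes basis: "nf_basis d \<alpha>"
begin

abbreviation "K \<equiv> nf_K d \<alpha>"
abbreviation "n \<equiv> Suc d"

definition \<omega> :: "nat \<Rightarrow> real" where "\<omega> i = (if i = 0 then 1 else \<alpha> i)"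

lemma sum_\<omega>_eq: "of_rat (q 0) + (\<Sum>i=1..d. of_rat (q i) * \<alpha> i) = (\<Sum>i<n. of_rat (q i) * \<omega> i)"
  unfolding sum.lessThan_Suc_shift \<omega>_def by (simp add: sum.atLeast1_atMost_eq)

lemma K_eq_span: "K = {x. \<exists>q. x = (\<Sum>i<n. of_rat (q i) * \<omega> i)}"
  unfolding nf_K_def sum_\<omega>_eq by simp

lemma \<omega>_independent: "(\<Sum>i<n. of_rat (q i) * \<omega> i) = (0::real) \<Longrightarrow> i < n \<Longrightarrow> q i = 0"
  using basis unfolding nf_basis_def sum_\<omega>_eq by auto

lemma K_mult: "x \<in> K \<Longrightarrow> y \<in> K \<Longrightarrow> x * y \<in> K"
  and K_inverse: "x \<in> K \<Longrightarrow> inverse x \<in> K"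
  using basis unfolding nf_basis_def by auto

lemma K_spanI: "x = (\<Sum>i<n. of_rat (q i) * \<omega> i) \<Longrightarrow> x \<in> K"
  unfolding K_eq_span by blast

lemma K_add: "x \<in> K \<Longrightarrow> y \<in> K \<Longrightarrow> x + y \<in> K"
proof -
  assume "x \<in> K" "y \<in> K"
  then obtain p q where "x = (\<Sum>i<n. of_rat (p i) * \<omega> i)" "y = (\<Sum>i<n. of_rat (q i) * \<omega> i)"
    unfolding K_eq_span by auto
  hence "x + y = (\<Sum>i<n. of_rat (p i + q i) * \<omega> i)"
    by (simp add: sum.distrib of_rat_add distrib_right del: sum.lessThan_Suc)
  thus ?thesis by (rule K_spanI)
qed

lemma K_scale: "x \<in> K \<Longrightarrow> of_rat c * x \<in> K"
proof -
  assume "x \<in> K"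
  then obtain p where "x = (\<Sum>i<n. of_rat (p i) * \<omega> i)" unfolding K_eq_span by auto
  hence "of_rat c * x = (\<Sum>i<n. of_rat (c * p i) * \<omega> i)"
    by (simp add: sum_distrib_left of_rat_mult mult.assoc del: sum.lessThan_Suc)
  thus ?thesis by (rule K_spanI)
qed

lemma sum_delta_\<omega>: "j < n \<Longrightarrow> (\<Sum>i<n. of_rat (of_int (if i = j then 1 else 0)) * \<omega> i) = \<omega> j"
proof -
  have "(\<Sum>i<n. of_rat (of_int (if i = j then 1 else 0)) * \<omega> i) = (\<Sum>i<n. if i = j then \<omega> i else 0)"
    by (rule sum.cong) auto
  thus "j < n \<Longrightarrow> ?thesis" by (simp del: sum.lessThan_Suc)
qed

lemma K_\<omega>: "j < n \<Longrightarrow> \<omega> j \<in> K"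
  using K_spanI sum_delta_\<omega> by metis

lemma K_0: "0 \<in> K"
  using K_scale[OF K_\<omega>[of 0], of 0] by simp

lemma K_1: "1 \<in> K"
  using K_\<omega>[of 0] by (simp add: \<omega>_def)

lemma K_of_rat: "of_rat c \<in> K"
  using K_scale[OF K_1, of c] by simp

lemma K_uminus: "x \<in> K \<Longrightarrow> - x \<in> K"
  using K_scale[of x "-1"] by simp

lemma K_sum: "finite J \<Longrightarrow> (\<And>j. j \<in> J \<Longrightarrow> z j \<in> K) \<Longrightarrow> (\<Sum>j\<in>J. z j) \<in> K"
  by (induction J rule: finite_induct) (auto intro: K_add K_0)

definition coord :: "real \<Rightarrow> nat \<Rightarrow> rat" where
  "coord x = (SOME q. x = (\<Sum>i<n. of_rat (q i) * \<omega> i))"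

lemma coord_expansion:
  assumes "x \<in> K"
  shows "x = (\<Sum>i<n. of_rat (coord x i) * \<omega> i)"
proof -
  have "\<exists>q. x = (\<Sum>i<n. of_rat (q i) * \<omega> i)" using assms unfolding K_eq_span by blast
  thus ?thesis unfolding coord_def by (rule someI_ex)
qed

lemma coord_unique:
  assumes "x = (\<Sum>i<n. of_rat (q i) * \<omega> i)" "i < n"
  shows "coord x i = q i"
proof -
  have "(\<Sum>i<n. of_rat (coord x i) * \<omega> i) - (\<Sum>i<n. of_rat (q i) * \<omega> i) = 0"
    using coord_expansion[OF K_spanI[OF assms(1)]] assms(1) by simp
  hence "(\<Sum>i<n. of_rat (coord x i - q i) * \<omega> i) = 0"
    by (simp add: sum_subtractf of_rat_diff left_diff_distrib del: sum.lessThan_Suc)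
  thus ?thesis using \<omega>_independent[of "\<lambda>i. coord x i - q i", OF _ assms(2)] by simp
qed

lemma coord_sum:
  assumes "finite J" "\<And>j. j \<in> J \<Longrightarrow> z j \<in> K" "i < n"
  shows "coord (\<Sum>j\<in>J. of_rat (a j) * z j) i = (\<Sum>j\<in>J. a j * coord (z j) i)"
proof -
  have "(\<Sum>j\<in>J. of_rat (a j) * z j) = (\<Sum>j\<in>J. of_rat (a j) * (\<Sum>k<n. of_rat (coord (z j) k) * \<omega> k))"
    by (rule sum.cong) (use coord_expansion assms(2) in auto)
  also have "\<dots> = (\<Sum>k<n. of_rat (\<Sum>j\<in>J. a j * coord (z j) k) * \<omega> k)"
    by (simp add: sum_distrib_left sum_distrib_right of_rat_sum of_rat_mult mult.assoc
        del: sum.lessThan_Suc) (rule sum.swap)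
  finally show ?thesis using assms(3) by (rule coord_unique)
qed

lemma coord_\<omega>: "j < n \<Longrightarrow> i < n \<Longrightarrow> coord (\<omega> j) i = (if i = j then 1 else 0)"
  using coord_unique[OF sum_delta_\<omega>[symmetric]] by simp

lemma coord_add: "x \<in> K \<Longrightarrow> y \<in> K \<Longrightarrow> i < n \<Longrightarrow> coord (x + y) i = coord x i + coord y i"
  using coord_sum[of "{0::nat,1}" "\<lambda>j. if j = 0 then x else y" i "\<lambda>_. 1"] by simp

abbreviation "E \<equiv> nf_embs K"

lemma emb_add: "\<sigma> \<in> E \<Longrightarrow> x \<in> K \<Longrightarrow> y \<in> K \<Longrightarrow> \<sigma> (x + y) = \<sigma> x + \<sigma> y"
  and emb_mult: "\<sigma> \<in> E \<Longrightarrow> x \<in> K \<Longrightarrow> y \<in> K \<Longrightarrow> \<sigma> (x * y) = \<sigma> x * \<sigma> y"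
  and emb_1: "\<sigma> \<in> E \<Longrightarrow> \<sigma> 1 = 1"
  and emb_outside: "\<sigma> \<in> E \<Longrightarrow> x \<notin> K \<Longrightarrow> \<sigma> x = 0"
  unfolding nf_embs_def by auto

lemma emb_0: "\<sigma> \<in> E \<Longrightarrow> \<sigma> 0 = 0"
  using emb_add[of \<sigma> 0 0] K_0 by simp

lemma emb_uminus: "\<sigma> \<in> E \<Longrightarrow> x \<in> K \<Longrightarrow> \<sigma> (- x) = - \<sigma> x"
  using emb_add[of \<sigma> x "-x"] K_uminus emb_0[of \<sigma>] by (simp add: eq_neg_iff_add_eq_0 add.commute)

lemma emb_of_nat: "\<sigma> \<in> E \<Longrightarrow> \<sigma> (of_nat k) = of_nat k"
proof (induction k)
  case (Suc k)
  have "\<sigma> (1 + of_nat k) = \<sigma> 1 + \<sigma> (of_nat k)"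
    using emb_add[OF Suc.prems K_1, of "of_nat k"] K_of_rat[of "of_nat k"] by simp
  thus ?case using Suc emb_1 by (simp add: add.commute)
qed (simp add: emb_0)

lemma emb_of_int:
  assumes "\<sigma> \<in> E"
  shows "\<sigma> (of_int z) = of_int z"
proof (cases z rule: int_cases2)
  case (nonpos k)
  thus ?thesis using assms emb_of_nat emb_uminus K_of_rat[of "of_nat k"] by simp
qed (simp add: assms emb_of_nat)

lemma emb_inverse: "\<sigma> \<in> E \<Longrightarrow> x \<in> K \<Longrightarrow> x \<noteq> 0 \<Longrightarrow> \<sigma> (inverse x) = inverse (\<sigma> x)"
  and emb_nonzero: "\<sigma> \<in> E \<Longrightarrow> x \<in> K \<Longrightarrow> x \<noteq> 0 \<Longrightarrow> \<sigma> x \<noteq> 0"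
proof -
  assume s: "\<sigma> \<in> E" and x: "x \<in> K" "x \<noteq> 0"
  have "\<sigma> x * \<sigma> (inverse x) = 1"
    using emb_mult[OF s x(1) K_inverse[OF x(1)]] x(2) emb_1[OF s] by simp
  thus "\<sigma> (inverse x) = inverse (\<sigma> x)" "\<sigma> x \<noteq> 0" by (auto simp: inverse_unique)
qed

lemma emb_of_rat: "\<sigma> \<in> E \<Longrightarrow> \<sigma> (of_rat c) = of_rat c"
proof -
  assume s: "\<sigma> \<in> E"
  obtain a b where c: "c = Rat.Fract a b" and b: "b > 0" by (cases c) auto
  have "of_rat c = (of_int a * inverse (of_int b) :: real)"
    and "(of_rat c :: complex) = of_int a * inverse (of_int b)"
    using c b by (simp_all add: of_rat_rat divide_inverse)
  moreover have "of_int a \<in> K" "of_int b \<in> K"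
    using K_of_rat[of "of_int a"] K_of_rat[of "of_int b"] by simp_all
  ultimately show ?thesis
    using emb_mult[OF s, of "of_int a" "inverse (of_int b)"] emb_inverse[OF s, of "of_int b"]
      K_inverse emb_of_int[OF s] b by simp
qed

lemma emb_scale: "\<sigma> \<in> E \<Longrightarrow> x \<in> K \<Longrightarrow> \<sigma> (of_rat c * x) = of_rat c * \<sigma> x"
  using emb_mult[OF _ K_of_rat] emb_of_rat by simp

lemma emb_sum:
  assumes "\<sigma> \<in> E"
  shows "finite J \<Longrightarrow> (\<And>j. j \<in> J \<Longrightarrow> z j \<in> K) \<Longrightarrow> \<sigma> (\<Sum>j\<in>J. z j) = (\<Sum>j\<in>J. \<sigma> (z j))"
proof (induction J rule: finite_induct)
  case (insert j J)
  thus ?case using emb_add[OF assms, of "z j" "\<Sum>j\<in>J. z j"] K_sum[of J z] by simp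
qed (simp add: emb_0[OF assms])

lemma emb_coord_expansion: "\<sigma> \<in> E \<Longrightarrow> x \<in> K \<Longrightarrow> \<sigma> x = (\<Sum>i<n. of_rat (coord x i) * \<sigma> (\<omega> i))"
proof -
  assume s: "\<sigma> \<in> E" and x: "x \<in> K"
  have "\<sigma> x = \<sigma> (\<Sum>i<n. of_rat (coord x i) * \<omega> i)" using coord_expansion[OF x] by simp
  also have "\<dots> = (\<Sum>i<n. \<sigma> (of_rat (coord x i) * \<omega> i))"
    by (rule emb_sum[OF s]) (auto intro: K_scale K_\<omega>)
  also have "\<dots> = (\<Sum>i<n. of_rat (coord x i) * \<sigma> (\<omega> i))"
    by (rule sum.cong) (auto intro: emb_scale[OF s] K_\<omega>)
  finally show ?thesis .
qed

lemma emb_eqI: "\<sigma> \<in> E \<Longrightarrow> \<tau> \<in> E \<Longrightarrow> (\<And>x. x \<in> K \<Longrightarrow> \<sigma> x = \<tau> x) \<Longrightarrow> \<sigma> = \<tau>"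
  using emb_outside by (intro ext) metis

abbreviation "\<iota> \<equiv> nf_id_emb K"

lemma id_emb: "\<iota> \<in> E"
  unfolding nf_embs_def nf_id_emb_def using K_add K_mult K_1 by auto

lemma id_emb_apply: "x \<in> K \<Longrightarrow> \<iota> x = of_real x"
  unfolding nf_id_emb_def by simp

definition conj_emb :: "(real \<Rightarrow> complex) \<Rightarrow> real \<Rightarrow> complex" where
  "conj_emb \<sigma> = (\<lambda>x. cnj (\<sigma> x))"

lemma conj_emb_in: "\<sigma> \<in> E \<Longrightarrow> conj_emb \<sigma> \<in> E"
  unfolding nf_embs_def conj_emb_def by auto

lemma conj_emb_conj_emb [simp]: "conj_emb (conj_emb \<sigma>) = \<sigma>"
  unfolding conj_emb_def by simp

subsection \<open>Counting the embeddings\<close>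

lemma embs_linear_independent:
  assumes "finite F" "F \<subseteq> E" "\<And>x. x \<in> K \<Longrightarrow> (\<Sum>\<sigma>\<in>F. a \<sigma> * \<sigma> x) = 0"
  shows "\<forall>\<sigma>\<in>F. a \<sigma> = 0"
  using assms
proof (induction F arbitrary: a rule: finite_induct)
  case (insert \<tau> F)
  have \<tau>: "\<tau> \<in> E" and FE: "F \<subseteq> E" using insert.prems(1) by auto
  have rel: "(\<Sum>\<sigma>\<in>F. a \<sigma> * \<sigma> x) = - (a \<tau> * \<tau> x)" if "x \<in> K" for x
    using insert.prems(2)[OF that] insert.hyps by (simp add: add.commute eq_neg_iff_add_eq_0)
  txt \<open>Subtracting the relation at x multiplied by \<tau> y from the relation at y x gives a
    shorter relation among the members of F.\<close>
  have shorter: "\<forall>\<sigma>\<in>F. a \<sigma> * (\<sigma> y - \<tau> y) = 0" if y: "y \<in> K" for y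
  proof (rule insert.IH[OF FE])
    fix x assume x: "x \<in> K"
    have "(\<Sum>\<sigma>\<in>F. a \<sigma> * (\<sigma> y - \<tau> y) * \<sigma> x)
        = (\<Sum>\<sigma>\<in>F. a \<sigma> * \<sigma> (y * x)) - \<tau> y * (\<Sum>\<sigma>\<in>F. a \<sigma> * \<sigma> x)"
      using FE x y
      by (auto simp: sum_distrib_left sum_subtractf[symmetric] algebra_simps emb_mult intro!: sum.cong)
    also have "\<dots> = 0"
      unfolding rel[OF K_mult[OF y x]] rel[OF x] emb_mult[OF \<tau> y x] by simp
    finally show "(\<Sum>\<sigma>\<in>F. a \<sigma> * (\<sigma> y - \<tau> y) * \<sigma> x) = 0" .
  qed
  have aF: "\<forall>\<sigma>\<in>F. a \<sigma> = 0"
  proof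
    fix \<sigma> assume s: "\<sigma> \<in> F"
    hence "\<sigma> \<noteq> \<tau>" using insert.hyps by auto
    then obtain y where "y \<in> K" "\<sigma> y \<noteq> \<tau> y" using emb_eqI[OF _ \<tau>] s FE by blast
    thus "a \<sigma> = 0" using shorter s by auto
  qed
  hence "a \<tau> = 0" using rel[OF K_1] emb_1[OF \<tau>] by simp
  thus ?case using aF by simp
qed simp

lemma embs_independent_on_basis:
  assumes "finite F" "F \<subseteq> E" "\<forall>i<n. (\<Sum>\<sigma>\<in>F. b \<sigma> * \<sigma> (\<omega> i)) = 0"
  shows "\<forall>\<sigma>\<in>F. b \<sigma> = 0"
proof (rule embs_linear_independent[OF assms(1,2)])
  fix x assume x: "x \<in> K"
  have "(\<Sum>\<sigma>\<in>F. b \<sigma> * \<sigma> x) = (\<Sum>\<sigma>\<in>F. b \<sigma> * (\<Sum>i<n. of_rat (coord x i) * \<sigma> (\<omega> i)))"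
    using assms(2) by (intro sum.cong) (auto simp: emb_coord_expansion[OF _ x] simp del: sum.lessThan_Suc)
  also have "\<dots> = (\<Sum>i<n. of_rat (coord x i) * (\<Sum>\<sigma>\<in>F. b \<sigma> * \<sigma> (\<omega> i)))"
    by (simp add: sum_distrib_left algebra_simps del: sum.lessThan_Suc) (rule sum.swap)
  also have "\<dots> = 0" using assms(3) by simp
  finally show "(\<Sum>\<sigma>\<in>F. b \<sigma> * \<sigma> x) = 0" .
qed

lemma finite_embs_card_le: "finite E \<and> card E \<le> n"
proof (rule ccontr)
  assume "\<not> ?thesis"
  then obtain F where F: "F \<subseteq> E" "finite F" "card F = Suc n"
    by (metis infinite_arbitrarily_large not_less_eq_eq obtain_subset_with_card_n)
  then obtain g where g: "bij_betw g {..<Suc n} F"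
    using ex_bij_betw_nat_finite[of F] by (metis atLeast0LessThan)
  obtain a where a: "\<exists>j<Suc n. a j \<noteq> 0" "\<forall>i<n. (\<Sum>j<Suc n. a j * g j (\<omega> i)) = 0"
    using homogeneous_system_nontrivial_solution[of n "Suc n" "\<lambda>j i. g j (\<omega> i)"] by auto
  define b where "b = a \<circ> inv_into {..<Suc n} g"
  have "(\<Sum>\<sigma>\<in>F. b \<sigma> * \<sigma> (\<omega> i)) = 0" if "i < n" for i
    using sum.reindex_bij_betw[OF g, of "\<lambda>\<sigma>. b \<sigma> * \<sigma> (\<omega> i)"] bij_betw_inv_into_left[OF g] a(2) that
    by (simp add: b_def)
  hence "\<forall>\<sigma>\<in>F. b \<sigma> = 0" using embs_independent_on_basis[OF F(2,1)] by blast
  moreover obtain j where "j < Suc n" "a j \<noteq> 0" using a(1) by blast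
  ultimately show False
    using bij_betwE[OF g] bij_betw_inv_into_left[OF g] by (force simp: b_def)
qed

definition mult_coeff :: "real \<Rightarrow> nat \<Rightarrow> nat \<Rightarrow> rat" where
  "mult_coeff x i k = coord (x * \<omega> i) k"

lemma mult_coeff_expansion: "x \<in> K \<Longrightarrow> i < n \<Longrightarrow> x * \<omega> i = (\<Sum>k<n. of_rat (mult_coeff x i k) * \<omega> k)"
  unfolding mult_coeff_def by (rule coord_expansion) (auto intro: K_mult K_\<omega>)

lemma emb_mult_coeff:
  "\<sigma> \<in> E \<Longrightarrow> x \<in> K \<Longrightarrow> i < n \<Longrightarrow> \<sigma> x * \<sigma> (\<omega> i) = (\<Sum>k<n. of_rat (mult_coeff x i k) * \<sigma> (\<omega> k))"
  unfolding mult_coeff_def using emb_mult[of \<sigma> x "\<omega> i"] emb_coord_expansion[of \<sigma> "x * \<omega> i"] K_\<omega> K_mult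
  by simp

lemma mult_coeff_sum:
  assumes "finite J" "\<And>j. j \<in> J \<Longrightarrow> z j \<in> K" "i < n" "k < n"
  shows "mult_coeff (\<Sum>j\<in>J. of_rat (b j) * z j) i k = (\<Sum>j\<in>J. b j * mult_coeff (z j) i k)"
proof -
  have "(\<Sum>j\<in>J. of_rat (b j) * z j) * \<omega> i = (\<Sum>j\<in>J. of_rat (b j) * (z j * \<omega> i))"
    by (simp add: sum_distrib_right mult.assoc)
  thus ?thesis unfolding mult_coeff_def
    using coord_sum[OF assms(1), of "\<lambda>j. z j * \<omega> i" k b] assms K_mult K_\<omega> by simp
qed

lemma mult_coeff_coord:
  "x \<in> K \<Longrightarrow> i < n \<Longrightarrow> k < n \<Longrightarrow> mult_coeff x i k = (\<Sum>j<n. coord x j * mult_coeff (\<omega> j) i k)"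
  using mult_coeff_sum[of "{..<n}" \<omega> i k "coord x"] coord_expansion[of x] K_\<omega> by simp

lemma mult_coeff_mult:
  assumes x: "x \<in> K" and y: "y \<in> K" and i: "i < n" and k: "k < n"
  shows "mult_coeff (x * y) i k = (\<Sum>l<n. mult_coeff y i l * mult_coeff x l k)"
proof -
  have "x * y * \<omega> i = (\<Sum>l<n. of_rat (mult_coeff y i l) * (x * \<omega> l))"
    unfolding mult.assoc mult_coeff_expansion[OF y i]
    by (simp add: sum_distrib_left algebra_simps del: sum.lessThan_Suc)
  hence "coord (x * y * \<omega> i) k = (\<Sum>l<n. mult_coeff y i l * coord (x * \<omega> l) k)"
    using coord_sum[of "{..<n}" "\<lambda>l. x * \<omega> l" k] K_mult[OF x K_\<omega>] k by simp
  thus ?thesis unfolding mult_coeff_def .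
qed

lemma mult_coeff_1: "i < n \<Longrightarrow> k < n \<Longrightarrow> mult_coeff 1 i k = (if k = i then 1 else 0)"
  unfolding mult_coeff_def by (simp add: coord_\<omega>)

lemma mult_coeff_\<omega>_swap: "mult_coeff (\<omega> j) i k = mult_coeff (\<omega> i) j k"
  by (simp add: mult_coeff_def mult.commute)

definition mult_entry :: "real \<Rightarrow> nat \<Rightarrow> nat \<Rightarrow> complex" where
  "mult_entry x i k = of_rat (mult_coeff x i k)"

lemma row_mult_mult_entry_mult:
  assumes "x \<in> K" "y \<in> K"
  shows "row_mult n (mult_entry (x * y)) v = row_mult n (mult_entry x) (row_mult n (mult_entry y) v)"
proof (rule ext)
  fix k
  show "row_mult n (mult_entry (x * y)) v k = row_mult n (mult_entry x) (row_mult n (mult_entry y) v) k"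
  proof (cases "k < n")
    case True
    have "(\<Sum>i<n. v i * mult_entry (x * y) i k)
        = (\<Sum>i<n. \<Sum>l<n. v i * mult_entry y i l * mult_entry x l k)"
      by (rule sum.cong) (auto simp: mult_entry_def mult_coeff_mult[OF assms _ True] of_rat_sum
          of_rat_mult sum_distrib_left mult.assoc simp del: sum.lessThan_Suc)
    also have "\<dots> = (\<Sum>l<n. (\<Sum>i<n. v i * mult_entry y i l) * mult_entry x l k)"
      by (subst sum.swap) (simp add: sum_distrib_right del: sum.lessThan_Suc)
    finally show ?thesis using True unfolding row_mult_def by simp
  qed (simp add: row_mult_def)
qed

lemma row_mult_mult_entry_coord:
  assumes "x \<in> K"
  shows "row_mult n (mult_entry x) v = (\<lambda>k. \<Sum>j<n. of_rat (coord x j) * row_mult n (mult_entry (\<omega> j)) v k)"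
proof (rule ext)
  fix k
  show "row_mult n (mult_entry x) v k = (\<Sum>j<n. of_rat (coord x j) * row_mult n (mult_entry (\<omega> j)) v k)"
  proof (cases "k < n")
    case True
    have "(\<Sum>i<n. v i * mult_entry x i k) = (\<Sum>i<n. \<Sum>j<n. of_rat (coord x j) * (v i * mult_entry (\<omega> j) i k))"
      by (rule sum.cong) (auto simp: mult_entry_def mult_coeff_coord[OF assms _ True] of_rat_sum
          of_rat_mult sum_distrib_left algebra_simps simp del: sum.lessThan_Suc)
    thus ?thesis
      using True by (subst (asm) sum.swap) (simp add: row_mult_def sum_distrib_left del: sum.lessThan_Suc)
  qed (simp add: row_mult_def)
qed

lemma row_mult_mult_entry_1: "(\<forall>k. n \<le> k \<longrightarrow> v k = 0) \<Longrightarrow> row_mult n (mult_entry 1) v = v"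
  by (auto simp: row_mult_def mult_entry_def mult_coeff_1 if_distrib cong: if_cong)

definition rat_trace :: "real \<Rightarrow> rat" where
  "rat_trace x = (\<Sum>k<n. mult_coeff x k k)"

lemma rat_trace_sum:
  assumes "finite J" "\<And>j. j \<in> J \<Longrightarrow> z j \<in> K"
  shows "rat_trace (\<Sum>j\<in>J. of_rat (b j) * z j) = (\<Sum>j\<in>J. b j * rat_trace (z j))"
  unfolding rat_trace_def using assms
  by (simp add: mult_coeff_sum sum_distrib_left del: sum.lessThan_Suc) (rule sum.swap)

lemma rat_trace_1: "rat_trace 1 = of_nat n"
  unfolding rat_trace_def by (simp add: mult_coeff_1 del: sum.lessThan_Suc)

text \<open>The trace form is nondegenerate: otherwise some x \<noteq> 0 has rat_trace (x * y) = 0 for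
  all y, but y = inverse x gives rat_trace 1 = n.\<close>

lemma trace_form_nondegenerate:
  assumes a: "\<forall>m<n. (\<Sum>j<n. a j * rat_trace (\<omega> j * \<omega> m)) = 0"
  shows "\<forall>j<n. a j = 0"
proof (rule ccontr)
  assume a_nonzero: "\<not> ?thesis"
  define x where "x = (\<Sum>j<n. of_rat (a j) * \<omega> j)"
  have xK: "x \<in> K" unfolding x_def by (rule K_spanI) simp
  have "x \<noteq> 0" using \<omega>_independent[of a] a_nonzero unfolding x_def by blast
  have x_orth: "rat_trace (x * \<omega> m) = 0" if "m < n" for m
  proof -
    have "x * \<omega> m = (\<Sum>j<n. of_rat (a j) * (\<omega> j * \<omega> m))"
      unfolding x_def by (simp add: sum_distrib_right mult.assoc del: sum.lessThan_Suc)
    thus ?thesis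
      using a that rat_trace_sum[of "{..<n}" "\<lambda>j. \<omega> j * \<omega> m" a]
      by (simp add: K_mult K_\<omega> del: sum.lessThan_Suc)
  qed
  have "1 = x * inverse x" using \<open>x \<noteq> 0\<close> by simp
  also have "\<dots> = (\<Sum>m<n. of_rat (coord (inverse x) m) * (x * \<omega> m))"
    by (subst coord_expansion[OF K_inverse[OF xK]])
      (simp add: sum_distrib_left algebra_simps del: sum.lessThan_Suc)
  finally have "1 = (\<Sum>m<n. of_rat (coord (inverse x) m) * (x * \<omega> m))" .
  hence "rat_trace 1 = rat_trace (\<Sum>m<n. of_rat (coord (inverse x) m) * (x * \<omega> m))"
    by (rule arg_cong)
  also have "\<dots> = (\<Sum>m<n. coord (inverse x) m * rat_trace (x * \<omega> m))"
    by (rule rat_trace_sum) (auto intro: K_mult xK K_\<omega>)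
  finally have "rat_trace 1 = 0" using x_orth by simp
  thus False unfolding rat_trace_1 by simp
qed

definition annihilates_embs :: "(nat \<Rightarrow> complex) \<Rightarrow> bool" where
  "annihilates_embs v \<longleftrightarrow> (\<forall>k. n \<le> k \<longrightarrow> v k = 0) \<and> (\<forall>\<sigma>\<in>E. (\<Sum>i<n. v i * \<sigma> (\<omega> i)) = 0)"

lemma annihilates_embs_add: "annihilates_embs u \<Longrightarrow> annihilates_embs v \<Longrightarrow> annihilates_embs (\<lambda>k. u k + v k)"
  unfolding annihilates_embs_def by (simp add: distrib_right sum.distrib del: sum.lessThan_Suc)

lemma annihilates_embs_scale: "annihilates_embs v \<Longrightarrow> annihilates_embs (\<lambda>k. c * v k)"
  unfolding annihilates_embs_def by (simp add: sum_distrib_left[symmetric] mult.assoc del: sum.lessThan_Suc)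

lemma annihilates_embs_row_mult:
  assumes v: "annihilates_embs v" and x: "x \<in> K"
  shows "annihilates_embs (row_mult n (mult_entry x) v)"
proof -
  have "(\<Sum>k<n. row_mult n (mult_entry x) v k * \<sigma> (\<omega> k)) = 0" if s: "\<sigma> \<in> E" for \<sigma>
  proof -
    have "(\<Sum>k<n. row_mult n (mult_entry x) v k * \<sigma> (\<omega> k))
        = (\<Sum>i<n. v i * (\<Sum>k<n. of_rat (mult_coeff x i k) * \<sigma> (\<omega> k)))"
      by (simp add: row_mult_def mult_entry_def sum_distrib_left sum_distrib_right mult.assoc
          del: sum.lessThan_Suc) (rule sum.swap)
    also have "\<dots> = (\<Sum>i<n. v i * (\<sigma> x * \<sigma> (\<omega> i)))"
      by (rule sum.cong) (simp_all add: emb_mult_coeff[OF s x])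
    also have "\<dots> = \<sigma> x * (\<Sum>i<n. v i * \<sigma> (\<omega> i))"
      by (simp add: sum_distrib_left algebra_simps del: sum.lessThan_Suc)
    finally show ?thesis using v s unfolding annihilates_embs_def by simp
  qed
  thus ?thesis unfolding annihilates_embs_def by (simp add: row_mult_def)
qed

text \<open>The multiplication operators commute, so each one preserves the common eigenspaces of
  the others; inside these eigenspaces we find eigenvectors one operator at a time.\<close>

lemma common_eigenvector_exists:
  assumes w: "annihilates_embs w" "w \<noteq> (\<lambda>_. 0)"
  shows "\<exists>v \<mu>. annihilates_embs v \<and> v \<noteq> (\<lambda>_. 0) \<and>
           (\<forall>l<n. row_mult n (mult_entry (\<omega> l)) v = (\<lambda>k. \<mu> l * v k))"
proof -
  have "\<exists>v \<mu>. annihilates_embs v \<and> v \<noteq> (\<lambda>_. 0) \<and>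
          (\<forall>l<j. row_mult n (mult_entry (\<omega> l)) v = (\<lambda>k. \<mu> l * v k))" if "j \<le> n" for j
    using that
  proof (induction j)
    case 0 thus ?case using w by blast
  next
    case (Suc j)
    then obtain v \<mu> where v: "annihilates_embs v" "v \<noteq> (\<lambda>_. 0)"
      "\<forall>l<j. row_mult n (mult_entry (\<omega> l)) v = (\<lambda>k. \<mu> l * v k)"
      by auto
    have j: "j < n" using Suc.prems by simp
    define W where "W u \<longleftrightarrow> annihilates_embs u \<and>
      (\<forall>l<j. row_mult n (mult_entry (\<omega> l)) u = (\<lambda>k. \<mu> l * u k))" for u
    have comm: "row_mult n (mult_entry (\<omega> l)) (row_mult n (mult_entry (\<omega> j)) u)
        = row_mult n (mult_entry (\<omega> j)) (row_mult n (mult_entry (\<omega> l)) u)" if "l < j" for l u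
      using row_mult_mult_entry_mult[OF K_\<omega> K_\<omega>, of l j u] row_mult_mult_entry_mult[OF K_\<omega> K_\<omega>, of j l u]
        j that by (simp add: mult.commute)
    have "row_mult_invariant_subspace n (mult_entry (\<omega> j)) W"
    proof
      show "W (\<lambda>k. u k + v k)" if "W u" "W v" for u v
        using that by (auto simp: W_def annihilates_embs_add row_mult_add distrib_left)
      show "W (\<lambda>k. c * v k)" if "W v" for c v
        using that by (auto simp: W_def annihilates_embs_scale row_mult_scale)
      show "W (row_mult n (mult_entry (\<omega> j)) v)" if "W v" for v
        using that by (auto simp: W_def annihilates_embs_row_mult K_\<omega> j comm row_mult_scale)
      show "v k = 0" if "W v" "n \<le> k" for v k
        using that by (simp add: W_def annihilates_embs_def)
    qed
    then obtain v' c where "W v'" "v' \<noteq> (\<lambda>_. 0)" "row_mult n (mult_entry (\<omega> j)) v' = (\<lambda>k. c * v' k)"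
      using row_mult_invariant_subspace.eigenvector_exists[of n _ W v] v unfolding W_def by blast
    thus ?case unfolding W_def by (intro exI[of _ v'] exI[of _ "\<mu>(j := c)"]) (auto simp: less_Suc_eq)
  qed
  thus ?thesis by blast
qed

text \<open>A common eigenvector of the multiplication operators defines an embedding: its
  eigenvalue for multiplication by x.\<close>

lemma common_eigenvector_emb:
  assumes supp: "\<forall>k. n \<le> k \<longrightarrow> v k = 0" and "v \<noteq> (\<lambda>_. 0)"
    and eigen: "\<forall>l<n. row_mult n (mult_entry (\<omega> l)) v = (\<lambda>k. \<mu> l * v k)"
  shows "\<exists>\<sigma>\<in>E. \<forall>l<n. \<sigma> (\<omega> l) = \<mu> l"
proof -
  obtain k0 where k0: "v k0 \<noteq> 0" using assms(2) by auto
  define \<chi> where "\<chi> x = (\<Sum>j<n. of_rat (coord x j) * \<mu> j)" for x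
  have eigen_\<chi>: "row_mult n (mult_entry x) v = (\<lambda>k. \<chi> x * v k)" if "x \<in> K" for x
    unfolding row_mult_mult_entry_coord[OF that] \<chi>_def using eigen
    by (simp add: sum_distrib_right mult.assoc del: sum.lessThan_Suc)
  have \<chi>_mult: "\<chi> (x * y) = \<chi> x * \<chi> y" if x: "x \<in> K" and y: "y \<in> K" for x y
  proof -
    have "\<chi> (x * y) * v k0 = row_mult n (mult_entry x) (row_mult n (mult_entry y) v) k0"
      using eigen_\<chi>[OF K_mult[OF x y]] row_mult_mult_entry_mult[OF x y, of v] by metis
    also have "\<dots> = \<chi> x * \<chi> y * v k0"
      unfolding eigen_\<chi>[OF y] row_mult_scale eigen_\<chi>[OF x] by simp
    finally show ?thesis using k0 by simp
  qed
  have \<chi>_add: "\<chi> (x + y) = \<chi> x + \<chi> y" if x: "x \<in> K" and y: "y \<in> K" for x y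
    unfolding \<chi>_def
    by (simp add: coord_add[OF x y] of_rat_add distrib_right sum.distrib del: sum.lessThan_Suc)
  have "\<chi> 1 * v k0 = v k0"
    using eigen_\<chi>[OF K_1] row_mult_mult_entry_1[OF supp] by metis
  hence \<chi>_1: "\<chi> 1 = 1" using k0 by simp
  define \<sigma> where "\<sigma> x = (if x \<in> K then \<chi> x else 0)" for x
  have "\<sigma> \<in> E"
    unfolding nf_embs_def \<sigma>_def using \<chi>_mult \<chi>_add \<chi>_1 K_add K_mult K_1 by auto
  moreover have "\<sigma> (\<omega> l) = \<mu> l" if "l < n" for l
  proof -
    have "\<chi> (\<omega> l) = (\<Sum>j<n. if j = l then \<mu> j else 0)"
      unfolding \<chi>_def by (rule sum.cong) (auto simp: coord_\<omega> that)
    thus ?thesis using that K_\<omega> by (simp add: \<sigma>_def)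
  qed
  ultimately show ?thesis by blast
qed

lemma trace_form_common_eigenvector:
  assumes \<sigma>: "\<sigma> \<in> E" and m: "m < n"
    and eigen: "\<forall>l<n. row_mult n (mult_entry (\<omega> l)) v = (\<lambda>k. \<sigma> (\<omega> l) * v k)"
  shows "(\<Sum>j<n. v j * of_rat (rat_trace (\<omega> j * \<omega> m)))
       = \<sigma> (\<omega> m) * (\<Sum>k<n. v k * \<sigma> (\<omega> k))"
proof -
  have eigen_entry: "(\<Sum>j<n. v j * mult_entry (\<omega> j) l k) = \<sigma> (\<omega> l) * v k" if "l < n" "k < n" for l k
  proof -
    have "(\<Sum>j<n. v j * mult_entry (\<omega> j) l k) = row_mult n (mult_entry (\<omega> l)) v k"
      using that by (simp add: row_mult_def mult_entry_def mult_coeff_\<omega>_swap[of _ l])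
    thus ?thesis using eigen that by simp
  qed
  have "(\<Sum>j<n. v j * of_rat (rat_trace (\<omega> j * \<omega> m)))
      = (\<Sum>j<n. \<Sum>k<n. \<Sum>l<n. v j * (mult_entry (\<omega> m) k l * mult_entry (\<omega> j) l k))"
    unfolding rat_trace_def
    by (rule sum.cong) (auto simp: mult_coeff_mult[OF K_\<omega> K_\<omega>] m mult_entry_def of_rat_sum
        of_rat_mult sum_distrib_left simp del: sum.lessThan_Suc)
  also have "\<dots> = (\<Sum>k<n. \<Sum>l<n. \<Sum>j<n. v j * (mult_entry (\<omega> m) k l * mult_entry (\<omega> j) l k))"
    by (subst sum.swap) (rule sum.cong[OF refl], rule sum.swap)
  also have "\<dots> = (\<Sum>k<n. \<Sum>l<n. mult_entry (\<omega> m) k l * (\<Sum>j<n. v j * mult_entry (\<omega> j) l k))"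
    by (simp add: sum_distrib_left algebra_simps del: sum.lessThan_Suc)
  also have "\<dots> = (\<Sum>k<n. \<Sum>l<n. mult_entry (\<omega> m) k l * (\<sigma> (\<omega> l) * v k))"
    by (intro sum.cong refl) (simp add: eigen_entry del: sum.lessThan_Suc)
  also have "\<dots> = (\<Sum>k<n. v k * (\<Sum>l<n. of_rat (mult_coeff (\<omega> m) k l) * \<sigma> (\<omega> l)))"
    by (simp add: mult_entry_def sum_distrib_left algebra_simps del: sum.lessThan_Suc)
  also have "\<dots> = (\<Sum>k<n. v k * (\<sigma> (\<omega> m) * \<sigma> (\<omega> k)))"
    by (intro sum.cong refl) (simp add: emb_mult_coeff[OF \<sigma> K_\<omega>[OF m]])
  also have "\<dots> = \<sigma> (\<omega> m) * (\<Sum>k<n. v k * \<sigma> (\<omega> k))"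
    by (simp add: sum_distrib_left algebra_simps del: sum.lessThan_Suc)
  finally show ?thesis .
qed

text \<open>If there were fewer than n embeddings, some nonzero vector would annihilate all of
  them, and so would a common eigenvector; but the trace form is nondegenerate.\<close>

lemma card_embs_ge: "n \<le> card E"
proof (rule ccontr)
  assume "\<not> n \<le> card E"
  obtain g where g: "bij_betw g {..<card E} E"
    using ex_bij_betw_nat_finite finite_embs_card_le by (metis atLeast0LessThan)
  obtain a where a: "\<exists>i<n. a i \<noteq> 0" "\<forall>j<card E. (\<Sum>i<n. a i * g j (\<omega> i)) = 0"
    using homogeneous_system_nontrivial_solution[of "card E" n "\<lambda>i j. g j (\<omega> i)"]
      \<open>\<not> n \<le> card E\<close> by auto
  define w where "w i = (if i < n then a i else 0)" for i
  have "annihilates_embs w"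
    unfolding annihilates_embs_def w_def using a(2) bij_betw_iff_bijections[of g] g
    by (auto simp del: sum.lessThan_Suc)
  moreover have "w \<noteq> (\<lambda>_. 0)" using a(1) unfolding w_def by metis
  ultimately obtain v \<mu> where v: "annihilates_embs v" "v \<noteq> (\<lambda>_. 0)"
    "\<forall>l<n. row_mult n (mult_entry (\<omega> l)) v = (\<lambda>k. \<mu> l * v k)"
    using common_eigenvector_exists by blast
  obtain \<sigma> where \<sigma>: "\<sigma> \<in> E" "\<forall>l<n. \<sigma> (\<omega> l) = \<mu> l"
    using common_eigenvector_emb v unfolding annihilates_embs_def by blast
  have "(\<Sum>k<n. v k * \<sigma> (\<omega> k)) = 0"
    using v(1) \<sigma>(1) unfolding annihilates_embs_def by blast
  moreover have "\<forall>l<n. row_mult n (mult_entry (\<omega> l)) v = (\<lambda>k. \<sigma> (\<omega> l) * v k)"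
    using v(3) \<sigma>(2) by simp
  ultimately have "\<forall>m<n. (\<Sum>j<n. v j * of_rat (rat_trace (\<omega> j * \<omega> m))) = 0"
    using trace_form_common_eigenvector[OF \<sigma>(1)] by simp
  hence "\<forall>j<n. v j = 0"
    by (rule rat_matrix_left_kernel_complex[OF trace_form_nondegenerate, rotated])
  hence "v = (\<lambda>_. 0)" using v(1) unfolding annihilates_embs_def by (metis not_le)
  thus False using v(2) by simp
qed

lemma finite_embs: "finite E" and card_embs: "card E = n"
  using card_embs_ge finite_embs_card_le by auto

definition mult_mat :: "real \<Rightarrow> complex mat" where
  "mult_mat x = mat n n (\<lambda>(i,k). mult_entry x i k)"

lemma mult_mat_carrier [simp]: "mult_mat x \<in> carrier_mat n n"
  unfolding mult_mat_def by simp

lemma mult_mat_mult: "x \<in> K \<Longrightarrow> y \<in> K \<Longrightarrow> mult_mat y * mult_mat x = mult_mat (x * y)"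
  by (rule eq_matI) (auto simp: mult_mat_def mult_entry_def mult_coeff_mult scalar_prod_def
      atLeast0LessThan of_rat_sum of_rat_mult simp del: sum.lessThan_Suc)

lemma mult_mat_1: "mult_mat 1 = 1\<^sub>m n"
  by (rule eq_matI) (auto simp: mult_mat_def mult_entry_def mult_coeff_1)

context
  fixes en :: "nat \<Rightarrow> real \<Rightarrow> complex"
  assumes en: "bij_betw en {..<n} E"
begin

definition emb_mat :: "complex mat" where
  "emb_mat = mat n n (\<lambda>(i,j). en j (\<omega> i))"

lemma emb_mat_carrier: "emb_mat \<in> carrier_mat n n"
  unfolding emb_mat_def by simp

lemma det_emb_mat_nonzero: "det emb_mat \<noteq> 0"
proof
  assume "det emb_mat = 0"
  then obtain a where a: "a \<in> carrier_vec n" "a \<noteq> 0\<^sub>v n" "emb_mat *\<^sub>v a = 0\<^sub>v n"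
    using det_0_iff_vec_prod_zero_field[OF emb_mat_carrier] by auto
  define b where "b \<sigma> = a $ (inv_into {..<n} en \<sigma>)" for \<sigma>
  have "(\<Sum>\<sigma>\<in>E. b \<sigma> * \<sigma> (\<omega> i)) = 0" if i: "i < n" for i
  proof -
    have "(\<Sum>\<sigma>\<in>E. b \<sigma> * \<sigma> (\<omega> i)) = (\<Sum>j<n. a $ j * en j (\<omega> i))"
      using sum.reindex_bij_betw[OF en, of "\<lambda>\<sigma>. b \<sigma> * \<sigma> (\<omega> i)"]
      by (simp add: b_def bij_betw_inv_into_left[OF en])
    also have "\<dots> = (emb_mat *\<^sub>v a) $ i"
      using i a(1) by (simp add: emb_mat_def scalar_prod_def atLeast0LessThan mult.commute)
    finally show ?thesis using a(3) i by simp
  qed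
  hence "\<forall>\<sigma>\<in>E. b \<sigma> = 0" using embs_independent_on_basis[OF finite_embs order_refl] by blast
  hence "a $ j = 0" if "j < n" for j
    using that bij_betwE[OF en] bij_betw_inv_into_left[OF en, of j] by (force simp: b_def)
  hence "a = 0\<^sub>v n" using a(1) by (intro eq_vecI) auto
  thus False using a(2) by simp
qed

lemma mult_mat_emb_mat:
  assumes x: "x \<in> K"
  shows "mult_mat x * emb_mat = emb_mat * mat n n (\<lambda>(i,j). if i = j then en j x else 0)"
proof (rule eq_matI)
  fix i j assume "i < dim_row (emb_mat * mat n n (\<lambda>(i,j). if i = j then en j x else 0))"
    "j < dim_col (emb_mat * mat n n (\<lambda>(i,j). if i = j then en j x else 0))"
  hence i: "i < n" and j: "j < n" by (auto simp: emb_mat_def)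
  have enE: "en j \<in> E" using en j bij_betwE by blast
  have "(mult_mat x * emb_mat) $$ (i,j) = (\<Sum>k<n. of_rat (mult_coeff x i k) * en j (\<omega> k))"
    using i j by (simp add: mult_mat_def emb_mat_def mult_entry_def scalar_prod_def atLeast0LessThan)
  also have "\<dots> = en j (\<omega> i) * en j x"
    using emb_mult_coeff[OF enE x i] by (simp add: mult.commute del: sum.lessThan_Suc)
  finally show "(mult_mat x * emb_mat) $$ (i,j)
      = (emb_mat * mat n n (\<lambda>(i,j). if i = j then en j x else 0)) $$ (i,j)"
    using i j by (simp add: emb_mat_def scalar_prod_def atLeast0LessThan if_distrib cong: if_cong)
qed (auto simp: emb_mat_def mult_mat_def)

end

lemma det_mult_mat: "x \<in> K \<Longrightarrow> det (mult_mat x) = (\<Prod>\<sigma>\<in>E. \<sigma> x)"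
proof -
  assume x: "x \<in> K"
  obtain en where en: "bij_betw en {..<n} E"
    using ex_bij_betw_nat_finite[OF finite_embs] card_embs by (metis atLeast0LessThan)
  define D where "D = mat n n (\<lambda>(i,j). if i = j then en j x else (0::complex))"
  have D: "D \<in> carrier_mat n n" unfolding D_def by simp
  have "det (mult_mat x) * det (emb_mat en) = det (emb_mat en) * det D"
    using mult_mat_emb_mat[OF en x] det_mult[OF mult_mat_carrier emb_mat_carrier[OF en]]
      det_mult[OF emb_mat_carrier[OF en] D] unfolding D_def by metis
  hence "det (mult_mat x) = det D" using det_emb_mat_nonzero[OF en] by simp
  also have "det D = prod_list (diag_mat D)"
    by (rule det_upper_triangular[OF _ D]) (simp add: D_def upper_triangular_def)
  also have "diag_mat D = map (\<lambda>j. en j x) [0..<n]"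
    unfolding diag_mat_def D_def by auto
  also have "prod_list (map (\<lambda>j. en j x) [0..<n]) = (\<Prod>j<n. en j x)"
    by (simp add: prod.distinct_set_conv_list[symmetric] atLeast0LessThan)
  also have "\<dots> = (\<Prod>\<sigma>\<in>E. \<sigma> x)"
    using prod.reindex_bij_betw[OF en, of "\<lambda>\<sigma>. \<sigma> x"] by simp
  finally show ?thesis .
qed

abbreviation "\<Lambda> \<equiv> nf_lattice d \<alpha>"

lemma lattice_eq_span: "\<Lambda> = {x. \<exists>a. x = (\<Sum>i<n. of_rat (of_int (a i)) * \<omega> i)}"
  using sum_\<omega>_eq[of "\<lambda>i. of_int (a i)" for a] unfolding nf_lattice_def by simp

lemma coord_lattice: "x \<in> \<Lambda> \<Longrightarrow> k < n \<Longrightarrow> coord x k \<in> \<int>"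
proof -
  assume "x \<in> \<Lambda>" "k < n"
  then obtain a where "x = (\<Sum>i<n. of_rat (of_int (a i)) * \<omega> i)" unfolding lattice_eq_span by blast
  from coord_unique[OF this \<open>k < n\<close>] show ?thesis by simp
qed

lemma \<omega>_lattice: "i < n \<Longrightarrow> \<omega> i \<in> \<Lambda>"
  unfolding lattice_eq_span
  by (rule CollectI, rule exI[of _ "\<lambda>j. if j = i then 1 else 0"], rule sum_delta_\<omega>[symmetric])

lemma det_mult_mat_Ints:
  assumes x: "x \<in> coeff_ring K \<Lambda>"
  shows "det (mult_mat x) \<in> \<int>"
proof -
  have "mult_coeff x i k \<in> \<int>" if "i < n" "k < n" for i k
    using x \<omega>_lattice[OF that(1)] coord_lattice that(2)
    unfolding coeff_ring_def mult_coeff_def by auto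
  hence "of_int \<lfloor>mult_coeff x i k\<rfloor> = mult_entry x i k" if "i < n" "k < n" for i k
    using that unfolding mult_entry_def by (metis Ints_cases floor_of_int of_rat_of_int_eq)
  hence "mult_mat x = map_mat of_int (mat n n (\<lambda>(i,k). \<lfloor>mult_coeff x i k\<rfloor>))"
    by (intro eq_matI) (auto simp: mult_mat_def)
  thus ?thesis by simp
qed

lemma cmod_prod_embs_unit:
  assumes u: "u \<in> coeff_units K \<Lambda>"
  shows "cmod (\<Prod>\<sigma>\<in>E. \<sigma> u) = 1"
proof -
  obtain v where ur: "u \<in> coeff_ring K \<Lambda>" and v: "v \<in> coeff_ring K \<Lambda>" "u * v = 1"
    using u unfolding coeff_units_def by auto
  have "u \<in> K" "v \<in> K" using ur v(1) unfolding coeff_ring_def by auto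
  hence "det (mult_mat v) * det (mult_mat u) = 1"
    using det_mult[OF mult_mat_carrier mult_mat_carrier, of v u] mult_mat_mult v(2) mult_mat_1 by simp
  moreover obtain zu zv where "det (mult_mat u) = of_int zu" "det (mult_mat v) = of_int zv"
    using det_mult_mat_Ints[OF ur] det_mult_mat_Ints[OF v(1)] by (auto elim!: Ints_cases)
  ultimately have "zv * zu = 1" by (metis of_int_eq_1_iff of_int_mult)
  hence "\<bar>zu\<bar> = 1" using zmult_eq_1_iff by (metis abs_1 abs_neg_one)
  hence "cmod (det (mult_mat u)) = 1"
    using \<open>det (mult_mat u) = of_int zu\<close> by (metis norm_of_int of_int_1 of_int_abs)
  thus ?thesis using det_mult_mat[OF \<open>u \<in> K\<close>] by simp
qed

lemma conj_emb_bij: "bij_betw conj_emb E E"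
  by (rule bij_betw_byWitness[of _ conj_emb]) (auto intro: conj_emb_in)

lemma sum_embs_real:
  assumes "\<And>\<sigma>. \<sigma> \<in> E \<Longrightarrow> f (conj_emb \<sigma>) = cnj (f \<sigma>)"
  shows "Im (\<Sum>\<sigma>\<in>E. f \<sigma>) = 0"
proof -
  have "cnj (\<Sum>\<sigma>\<in>E. f \<sigma>) = (\<Sum>\<sigma>\<in>E. f (conj_emb \<sigma>))" using assms by simp
  also have "\<dots> = (\<Sum>\<sigma>\<in>E. f \<sigma>)" using sum.reindex_bij_betw[OF conj_emb_bij, of f] by simp
  finally show ?thesis by (metis Reals_cnj_iff complex_is_Real_iff)
qed

lemma prod_embs_real: "Im (\<Prod>\<sigma>\<in>E. \<sigma> x) = 0"
proof -
  have "cnj (\<Prod>\<sigma>\<in>E. \<sigma> x) = (\<Prod>\<sigma>\<in>E. conj_emb \<sigma> x)" by (simp add: conj_emb_def)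
  also have "\<dots> = (\<Prod>\<sigma>\<in>E. \<sigma> x)"
    using prod.reindex_bij_betw[OF conj_emb_bij, of "\<lambda>\<sigma>. \<sigma> x"] by simp
  finally show ?thesis by (metis Reals_cnj_iff complex_is_Real_iff)
qed

abbreviation "R \<equiv> nf_real_embs K"
abbreviation "N \<equiv> nf_nonreal_embs K"

definition R' :: "(real \<Rightarrow> complex) set" where
  "R' = R - {\<iota>}"

text \<open>H picks one embedding out of each pair of complex conjugate ones: the one for which the
  first basis element with non-real image lands in the upper half plane.\<close>

definition first_nonreal :: "(real \<Rightarrow> complex) \<Rightarrow> nat" where
  "first_nonreal \<sigma> = (LEAST i. Im (\<sigma> (\<omega> i)) \<noteq> 0)"

definition H :: "(real \<Rightarrow> complex) set" where
  "H = {\<sigma>\<in>N. Im (\<sigma> (\<omega> (first_nonreal \<sigma>))) > 0}"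

lemma real_embs_subset: "R \<subseteq> E"
  unfolding nf_real_embs_def by auto

lemma nonreal_embs_eq: "N = E - R"
  unfolding nf_nonreal_embs_def by simp

lemma id_emb_real: "\<iota> \<in> R"
  unfolding nf_real_embs_def using id_emb by (auto simp: nf_id_emb_def)

lemma real_emb_iff:
  assumes "\<sigma> \<in> E"
  shows "\<sigma> \<in> R \<longleftrightarrow> (\<forall>i<n. Im (\<sigma> (\<omega> i)) = 0)"
proof
  assume "\<sigma> \<in> R" thus "\<forall>i<n. Im (\<sigma> (\<omega> i)) = 0" unfolding nf_real_embs_def using K_\<omega> by auto
next
  assume "\<forall>i<n. Im (\<sigma> (\<omega> i)) = 0"
  hence "Im (\<sigma> x) = 0" if "x \<in> K" for x
    by (simp add: emb_coord_expansion[OF assms that] Im_sum del: sum.lessThan_Suc)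
  thus "\<sigma> \<in> R" using assms unfolding nf_real_embs_def by auto
qed

lemma conj_emb_real:
  assumes "\<sigma> \<in> R"
  shows "conj_emb \<sigma> = \<sigma>"
proof
  fix x
  have "\<sigma> \<in> E" "x \<in> K \<Longrightarrow> Im (\<sigma> x) = 0" using assms unfolding nf_real_embs_def by auto
  thus "conj_emb \<sigma> x = \<sigma> x"
    using emb_outside[of \<sigma> x] by (cases "x \<in> K") (auto simp: conj_emb_def complex_eq_iff)
qed

lemma conj_emb_Im: "Im (conj_emb \<sigma> x) = - Im (\<sigma> x)"
  by (simp add: conj_emb_def)

lemma nonreal_emb_first_nonreal: "\<sigma> \<in> N \<Longrightarrow> Im (\<sigma> (\<omega> (first_nonreal \<sigma>))) \<noteq> 0"
proof -
  assume "\<sigma> \<in> N"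
  then obtain i where "Im (\<sigma> (\<omega> i)) \<noteq> 0" using real_emb_iff unfolding nonreal_embs_eq by auto
  thus ?thesis unfolding first_nonreal_def by (rule LeastI)
qed

lemma first_nonreal_conj_emb: "first_nonreal (conj_emb \<sigma>) = first_nonreal \<sigma>"
  unfolding first_nonreal_def conj_emb_Im by simp

lemma conj_emb_nonreal: "\<sigma> \<in> N \<Longrightarrow> conj_emb \<sigma> \<in> N"
  using conj_emb_real[of "conj_emb \<sigma>"] conj_emb_in unfolding nonreal_embs_eq
  by (metis DiffD1 DiffD2 DiffI conj_emb_conj_emb)

lemma conj_emb_H_iff: "\<sigma> \<in> N \<Longrightarrow> conj_emb \<sigma> \<in> H \<longleftrightarrow> \<sigma> \<notin> H"
  using nonreal_emb_first_nonreal[of \<sigma>] conj_emb_nonreal[of \<sigma>] unfolding H_def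
  by (auto simp: first_nonreal_conj_emb conj_emb_Im)

lemma H_subset: "H \<subseteq> N"
  unfolding H_def by auto

lemma nonreal_embs_split: "N = H \<union> conj_emb ` H" and H_conj_disjoint: "H \<inter> conj_emb ` H = {}"
proof -
  have "\<sigma> \<in> conj_emb ` H" if "\<sigma> \<in> N" "\<sigma> \<notin> H" for \<sigma>
    using conj_emb_H_iff[OF that(1)] that(2) image_eqI[of \<sigma> conj_emb "conj_emb \<sigma>"] by simp
  thus "N = H \<union> conj_emb ` H" using H_subset conj_emb_nonreal by auto
  show "H \<inter> conj_emb ` H = {}" using conj_emb_H_iff H_subset by auto
qed

lemma finite_R': "finite R'" and finite_H: "finite H"
  using finite_embs real_embs_subset H_subset unfolding R'_def nonreal_embs_eq
  by (auto intro: finite_subset)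

lemma inj_conj_emb: "inj_on conj_emb A"
  by (rule inj_on_inverseI[of _ conj_emb]) simp

lemma card_nonreal_embs: "card N = 2 * card H"
proof -
  have "card N = card H + card (conj_emb ` H)"
    unfolding nonreal_embs_split using card_Un_disjoint[OF finite_H _ H_conj_disjoint] finite_H by simp
  thus ?thesis using card_image[OF inj_conj_emb] by simp
qed

abbreviation "r \<equiv> card R - 1"
abbreviation "m \<equiv> card N div 2"

lemma card_R': "card R' = r"
  unfolding R'_def using id_emb_real finite_subset[OF real_embs_subset finite_embs] by simp

lemma card_H: "card H = m"
  using card_nonreal_embs by simp

lemma d_eq: "d = r + 2 * m"
proof -
  have "card R + card N = n"
    unfolding nonreal_embs_eq using card_Diff_subset[OF _ real_embs_subset] card_embs
      card_mono[OF finite_embs real_embs_subset] finite_subset[OF real_embs_subset finite_embs] by simp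
  moreover have "card R \<ge> 1"
    using id_emb_real card_mono[OF finite_subset[OF real_embs_subset finite_embs], of "{\<iota>}"] by simp
  ultimately show ?thesis using card_nonreal_embs by simp
qed

lemma embs_other_split: "E - {\<iota>} = R' \<union> (H \<union> conj_emb ` H)"
  and R'_H_disjoint: "R' \<inter> (H \<union> conj_emb ` H) = {}"
  unfolding R'_def nonreal_embs_split[symmetric] nonreal_embs_eq using real_embs_subset id_emb_real
  by auto

lemma sum_embs_split:
  "(\<Sum>\<sigma>\<in>E. f \<sigma>) = f \<iota> + (\<Sum>\<sigma>\<in>R'. f \<sigma>) + (\<Sum>\<sigma>\<in>H. f \<sigma> + f (conj_emb \<sigma>))"
proof -
  have "(\<Sum>\<sigma>\<in>E. f \<sigma>) = f \<iota> + (\<Sum>\<sigma>\<in>E - {\<iota>}. f \<sigma>)"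
    using sum.remove[OF finite_embs id_emb] by simp
  also have "(\<Sum>\<sigma>\<in>E - {\<iota>}. f \<sigma>) = (\<Sum>\<sigma>\<in>R'. f \<sigma>) + ((\<Sum>\<sigma>\<in>H. f \<sigma>) + (\<Sum>\<sigma>\<in>conj_emb ` H. f \<sigma>))"
    unfolding embs_other_split using R'_H_disjoint finite_R' finite_H H_conj_disjoint
    by (simp add: sum.union_disjoint)
  also have "(\<Sum>\<sigma>\<in>conj_emb ` H. f \<sigma>) = (\<Sum>\<sigma>\<in>H. f (conj_emb \<sigma>))"
    by (rule sum.reindex[OF inj_conj_emb, unfolded comp_def])
  finally show ?thesis by (simp add: sum.distrib add.assoc)
qed

lemma prod_embs_other_split:
  "(\<Prod>\<sigma>\<in>E - {\<iota>}. f \<sigma>) = (\<Prod>\<sigma>\<in>R'. f \<sigma>) * (\<Prod>\<sigma>\<in>H. f \<sigma> * f (conj_emb \<sigma>))"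
proof -
  have "(\<Prod>\<sigma>\<in>E - {\<iota>}. f \<sigma>) = (\<Prod>\<sigma>\<in>R'. f \<sigma>) * ((\<Prod>\<sigma>\<in>H. f \<sigma>) * (\<Prod>\<sigma>\<in>conj_emb ` H. f \<sigma>))"
    unfolding embs_other_split using R'_H_disjoint finite_R' finite_H H_conj_disjoint
    by (simp add: prod.union_disjoint)
  also have "(\<Prod>\<sigma>\<in>conj_emb ` H. f \<sigma>) = (\<Prod>\<sigma>\<in>H. f (conj_emb \<sigma>))"
    by (rule prod.reindex[OF inj_conj_emb, unfolded comp_def])
  finally show ?thesis by (simp add: prod.distrib)
qed

subsection \<open>The matrix M\<close>

definition \<rho> :: "nat \<Rightarrow> real \<Rightarrow> complex" where
  "\<rho> = (SOME g. bij_betw g {..<r} R')"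

definition \<tau> :: "nat \<Rightarrow> real \<Rightarrow> complex" where
  "\<tau> = (SOME g. bij_betw g {..<m} H)"

lemma \<rho>_bij: "bij_betw \<rho> {..<r} R'"
proof -
  have "\<exists>g. bij_betw g {..<r} R'"
    using ex_bij_betw_nat_finite[OF finite_R'] card_R' by (metis atLeast0LessThan)
  thus ?thesis unfolding \<rho>_def by (rule someI_ex)
qed

lemma \<tau>_bij: "bij_betw \<tau> {..<m} H"
proof -
  have "\<exists>g. bij_betw g {..<m} H"
    using ex_bij_betw_nat_finite[OF finite_H] card_H by (metis atLeast0LessThan)
  thus ?thesis unfolding \<tau>_def by (rule someI_ex)
qed

lemma \<rho>_in: "j < r \<Longrightarrow> \<rho> j \<in> R'"
  and \<tau>_in: "i < m \<Longrightarrow> \<tau> i \<in> H"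
  using \<rho>_bij \<tau>_bij bij_betwE by blast+

lemma R'_real: "\<sigma> \<in> R' \<Longrightarrow> \<sigma> \<in> R"
  unfolding R'_def by simp

lemma R'_other: "\<sigma> \<in> R' \<Longrightarrow> \<sigma> \<in> E - {\<iota>}"
  and H_other: "\<sigma> \<in> H \<Longrightarrow> \<sigma> \<in> E - {\<iota>}"
  using embs_other_split by auto

lemma H_nonreal: "\<sigma> \<in> H \<Longrightarrow> \<sigma> \<notin> R"
  and conj_H_nonreal: "\<sigma> \<in> H \<Longrightarrow> conj_emb \<sigma> \<notin> R"
  using H_subset conj_emb_nonreal unfolding nonreal_embs_eq by auto

text \<open>The coordinates of the paper's vector (z(\<sigma>_1), ..., z(\<sigma>_r), Re z(\<sigma>_{r+1}), Im z(\<sigma>_{r+1}), ...),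
  for an arbitrary function z on the embeddings.\<close>

definition emb_coords :: "((real \<Rightarrow> complex) \<Rightarrow> complex) \<Rightarrow> nat \<Rightarrow> real" where
  "emb_coords z j = (if j < r then Re (z (\<rho> j))
     else if even (j - r) then Re (z (\<tau> ((j - r) div 2))) else Im (z (\<tau> ((j - r) div 2))))"

definition emb_diff :: "(real \<Rightarrow> complex) \<Rightarrow> nat \<Rightarrow> complex" where
  "emb_diff \<sigma> l = of_real (\<omega> (Suc l)) - \<sigma> (\<omega> (Suc l))"

text \<open>Tr(y) \<alpha>_l - Tr(y \<alpha>_l) is the sum over all \<sigma> of \<sigma>(y) (\<alpha>_l - \<sigma>(\<alpha>_l)), in which the identity
  contributes nothing and a conjugate pair contributes 2 Re(\<sigma>(y) (\<alpha>_l - \<sigma>(\<alpha>_l))); so it is a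
  linear form in the coordinates of y, and M collects its coefficients.\<close>

definition M_entry :: "nat \<Rightarrow> nat \<Rightarrow> real" where
  "M_entry j l = (if j < r then Re (emb_diff (\<rho> j) l)
     else if even (j - r) then 2 * Re (emb_diff (\<tau> ((j - r) div 2)) l)
     else - 2 * Im (emb_diff (\<tau> ((j - r) div 2)) l))"

definition M :: "real mat" where
  "M = mat d d (\<lambda>(j,l). M_entry j l)"

lemma emb_coords_pair: "emb_coords z (r + 2 * i) = Re (z (\<tau> i))" "emb_coords z (r + 2 * i + 1) = Im (z (\<tau> i))"
  unfolding emb_coords_def by auto

lemma M_entry_pair:
  "M_entry (r + 2 * i) l = 2 * Re (emb_diff (\<tau> i) l)" "M_entry (r + 2 * i + 1) l = - 2 * Im (emb_diff (\<tau> i) l)"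
  unfolding M_entry_def by auto

lemma emb_diff_conj_emb: "emb_diff (conj_emb \<sigma>) l = cnj (emb_diff \<sigma> l)"
  unfolding emb_diff_def conj_emb_def by simp

lemma emb_diff_real: "\<sigma> \<in> R \<Longrightarrow> l < d \<Longrightarrow> Im (emb_diff \<sigma> l) = 0"
  unfolding emb_diff_def nf_real_embs_def using K_\<omega>[of "Suc l"] by auto

lemma emb_diff_id: "l < d \<Longrightarrow> emb_diff \<iota> l = 0"
  unfolding emb_diff_def using K_\<omega>[of "Suc l"] id_emb_apply by simp

lemma sum_emb_diff_eq_M_entry:
  assumes z: "\<And>\<sigma>. \<sigma> \<in> E \<Longrightarrow> z (conj_emb \<sigma>) = cnj (z \<sigma>)" and l: "l < d"
  shows "Re (\<Sum>\<sigma>\<in>E. z \<sigma> * emb_diff \<sigma> l) = (\<Sum>j<d. M_entry j l * emb_coords z j)"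
proof -
  have "Re (\<Sum>\<sigma>\<in>E. z \<sigma> * emb_diff \<sigma> l)
      = (\<Sum>\<sigma>\<in>R'. Re (z \<sigma> * emb_diff \<sigma> l))
        + (\<Sum>\<sigma>\<in>H. Re (z \<sigma> * emb_diff \<sigma> l + z (conj_emb \<sigma>) * emb_diff (conj_emb \<sigma>) l))"
    unfolding sum_embs_split[of "\<lambda>\<sigma>. z \<sigma> * emb_diff \<sigma> l"] by (simp add: emb_diff_id[OF l] Re_sum)
  also have "(\<Sum>\<sigma>\<in>R'. Re (z \<sigma> * emb_diff \<sigma> l)) = (\<Sum>j<r. Re (z (\<rho> j)) * Re (emb_diff (\<rho> j) l))"
    using sum.reindex_bij_betw[OF \<rho>_bij, of "\<lambda>\<sigma>. Re (z \<sigma> * emb_diff \<sigma> l)"] \<rho>_in emb_diff_real[OF _ l] R'_real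
    by simp
  also have "\<dots> = (\<Sum>j<r. M_entry j l * emb_coords z j)"
    by (rule sum.cong) (auto simp: M_entry_def emb_coords_def)
  also have "(\<Sum>\<sigma>\<in>H. Re (z \<sigma> * emb_diff \<sigma> l + z (conj_emb \<sigma>) * emb_diff (conj_emb \<sigma>) l))
      = (\<Sum>\<sigma>\<in>H. 2 * Re (z \<sigma>) * Re (emb_diff \<sigma> l) - 2 * Im (z \<sigma>) * Im (emb_diff \<sigma> l))"
    by (rule sum.cong) (use z H_other in \<open>auto simp: emb_diff_conj_emb\<close>)
  also have "\<dots> = (\<Sum>i<m. 2 * Re (z (\<tau> i)) * Re (emb_diff (\<tau> i) l)
                        - 2 * Im (z (\<tau> i)) * Im (emb_diff (\<tau> i) l))"
    using sum.reindex_bij_betw[OF \<tau>_bij,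
        of "\<lambda>\<sigma>. 2 * Re (z \<sigma>) * Re (emb_diff \<sigma> l) - 2 * Im (z \<sigma>) * Im (emb_diff \<sigma> l)"]
    by simp
  also have "\<dots> = (\<Sum>i<m. M_entry (r + 2*i) l * emb_coords z (r + 2*i)
                        + M_entry (r + 2*i + 1) l * emb_coords z (r + 2*i + 1))"
    by (rule sum.cong[OF refl], simp only: M_entry_pair emb_coords_pair, simp)
  finally show ?thesis by (simp add: sum_lessThan_add_double[of _ r m, folded d_eq])
qed

lemma trace_diff_eq_sum_emb_diff:
  assumes y: "y \<in> K" and i: "i < d"
  shows "nf_trace K y * \<alpha> (i + 1) - nf_trace K (y * \<alpha> (i + 1)) = Re (\<Sum>\<sigma>\<in>E. \<sigma> y * emb_diff \<sigma> i)"
proof -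
  have "\<alpha> (i + 1) = \<omega> (Suc i)" by (simp add: \<omega>_def)
  moreover have "(\<Sum>\<sigma>\<in>E. \<sigma> y * emb_diff \<sigma> i)
      = (\<Sum>\<sigma>\<in>E. \<sigma> y) * of_real (\<omega> (Suc i)) - (\<Sum>\<sigma>\<in>E. \<sigma> (y * \<omega> (Suc i)))"
    using K_\<omega>[of "Suc i"] i
    by (simp add: emb_diff_def sum_distrib_right right_diff_distrib sum_subtractf emb_mult[OF _ y])
  ultimately show ?thesis unfolding nf_trace_def by simp
qed

lemma M_transpose_emb_coords:
  assumes y: "y \<in> K" and i: "i < d"
  shows "(transpose_mat M *\<^sub>v vec d (emb_coords (\<lambda>\<sigma>. \<sigma> y))) $ i
      = nf_trace K y * \<alpha> (i + 1) - nf_trace K (y * \<alpha> (i + 1))"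
proof -
  have "(transpose_mat M *\<^sub>v vec d (emb_coords (\<lambda>\<sigma>. \<sigma> y))) $ i = (\<Sum>j<d. M_entry j i * emb_coords (\<lambda>\<sigma>. \<sigma> y) j)"
    using i by (simp add: M_def scalar_prod_def atLeast0LessThan)
  also have "\<dots> = Re (\<Sum>\<sigma>\<in>E. \<sigma> y * emb_diff \<sigma> i)"
    by (rule sum_emb_diff_eq_M_entry[symmetric]) (simp_all add: conj_emb_def i)
  finally show ?thesis using trace_diff_eq_sum_emb_diff[OF y i] by simp
qed

definition coords_emb_fun :: "real vec \<Rightarrow> (real \<Rightarrow> complex) \<Rightarrow> complex" where
  "coords_emb_fun x \<sigma> =
     (let c = (\<lambda>\<sigma>. Complex (x $ (r + 2 * inv_into {..<m} \<tau> \<sigma>)) (x $ (r + 2 * inv_into {..<m} \<tau> \<sigma> + 1)))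
      in if \<sigma> \<in> R' then complex_of_real (x $ inv_into {..<r} \<rho> \<sigma>)
         else if \<sigma> \<in> H then c \<sigma> else if conj_emb \<sigma> \<in> H then cnj (c (conj_emb \<sigma>)) else 0)"

lemma coords_emb_fun_conj_emb:
  assumes "\<sigma> \<in> E"
  shows "coords_emb_fun x (conj_emb \<sigma>) = cnj (coords_emb_fun x \<sigma>)"
proof -
  consider "\<sigma> \<in> R'" | "\<sigma> \<in> H" | "conj_emb \<sigma> \<in> H" | "\<sigma> \<notin> R'" "\<sigma> \<notin> H" "conj_emb \<sigma> \<notin> H"
    by blast
  thus ?thesis
  proof cases
    case 1 thus ?thesis using conj_emb_real R'_real by (auto simp: coords_emb_fun_def)
  next
    case 2
    hence "conj_emb \<sigma> \<notin> R'" "conj_emb \<sigma> \<notin> H" "\<sigma> \<notin> R'"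
      using conj_H_nonreal H_nonreal R'_real conj_emb_H_iff H_subset by blast+
    thus ?thesis using 2 by (simp add: coords_emb_fun_def)
  next
    case 3
    hence "\<sigma> \<notin> R'" "conj_emb \<sigma> \<notin> R'" "\<sigma> \<notin> H"
      using conj_H_nonreal[OF 3] H_nonreal[OF 3] R'_real conj_emb_H_iff[of "conj_emb \<sigma>"] H_subset
      by auto
    thus ?thesis using 3 by (simp add: coords_emb_fun_def)
  next
    case 4
    have "conj_emb \<sigma> \<notin> R'" using conj_emb_real[of "conj_emb \<sigma>"] R'_real 4(1) by auto
    thus ?thesis using 4 by (simp add: coords_emb_fun_def)
  qed
qed

lemma emb_coords_coords_emb_fun:
  assumes j: "j < d"
  shows "emb_coords (coords_emb_fun x) j = x $ j"
proof (cases "j < r")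
  case True
  thus ?thesis
    using \<rho>_in[OF True] bij_betw_inv_into_left[OF \<rho>_bij] by (simp add: emb_coords_def coords_emb_fun_def)
next
  case False
  define i where "i = (j - r) div 2"
  have i: "i < m" using j False d_eq unfolding i_def by linarith
  have "\<tau> i \<in> H" "\<tau> i \<notin> R'" "inv_into {..<m} \<tau> (\<tau> i) = i"
    using \<tau>_in[OF i] H_nonreal R'_real bij_betw_inv_into_left[OF \<tau>_bij] i by auto
  hence "emb_coords (coords_emb_fun x) (r + 2 * i) = x $ (r + 2 * i)"
    "emb_coords (coords_emb_fun x) (r + 2 * i + 1) = x $ (r + 2 * i + 1)"
    by (simp_all only: emb_coords_pair) (simp_all add: coords_emb_fun_def)
  moreover have "j = r + 2 * i \<or> j = r + 2 * i + 1" using False unfolding i_def by linarith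
  ultimately show ?thesis by auto
qed

text \<open>A conjugation-symmetric z with vanishing sums is killed by Dedekind's lemma applied to
  the coefficients (\<Sum>z) at \<iota> and -z elsewhere: paired with \<omega>_0 = 1 these sum to 0, and paired
  with \<omega>_{l+1} they give the sum of z \<sigma> * emb_diff \<sigma> l.\<close>

lemma conj_symmetric_vanishing:
  assumes z: "\<And>\<sigma>. \<sigma> \<in> E \<Longrightarrow> z (conj_emb \<sigma>) = cnj (z \<sigma>)"
    and ker: "\<forall>l<d. Re (\<Sum>\<sigma>\<in>E. z \<sigma> * emb_diff \<sigma> l) = 0"
  shows "\<forall>\<sigma>\<in>E - {\<iota>}. z \<sigma> = 0"
proof -
  have sum0: "(\<Sum>\<sigma>\<in>E. z \<sigma> * emb_diff \<sigma> l) = 0" if l: "l < d" for l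
  proof -
    have "Im (\<Sum>\<sigma>\<in>E. z \<sigma> * emb_diff \<sigma> l) = 0"
      by (rule sum_embs_real) (simp add: z emb_diff_conj_emb)
    thus ?thesis using ker l by (simp add: complex_eq_iff)
  qed
  define b where "b \<sigma> = (if \<sigma> = \<iota> then (\<Sum>\<tau>\<in>E. z \<tau>) else 0) - z \<sigma>" for \<sigma>
  have "(\<Sum>\<sigma>\<in>E. b \<sigma> * \<sigma> (\<omega> i)) = 0" if i: "i < n" for i
  proof -
    have "(\<Sum>\<sigma>\<in>E. b \<sigma> * \<sigma> (\<omega> i)) = (\<Sum>\<tau>\<in>E. z \<tau>) * \<iota> (\<omega> i) - (\<Sum>\<sigma>\<in>E. z \<sigma> * \<sigma> (\<omega> i))"
      unfolding b_def using id_emb finite_embs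
      by (simp add: left_diff_distrib sum_subtractf if_distrib[of "\<lambda>x. x * _"] sum.delta cong: if_cong)
    also have "\<dots> = (\<Sum>\<sigma>\<in>E. z \<sigma> * (of_real (\<omega> i) - \<sigma> (\<omega> i)))"
      using id_emb_apply[OF K_\<omega>[OF i]] by (simp add: sum_distrib_right right_diff_distrib sum_subtractf)
    also have "\<dots> = 0"
    proof (cases i)
      case 0 thus ?thesis by (simp add: \<omega>_def emb_1)
    next
      case (Suc l)
      thus ?thesis using sum0[of l] i unfolding emb_diff_def by simp
    qed
    finally show ?thesis .
  qed
  hence b0: "\<forall>\<sigma>\<in>E. b \<sigma> = 0" using embs_independent_on_basis[OF finite_embs order_refl] by blast
  show ?thesis
  proof
    fix \<sigma> assume \<sigma>: "\<sigma> \<in> E - {\<iota>}"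
    hence "b \<sigma> = 0" using b0 by blast
    thus "z \<sigma> = 0" using \<sigma> by (simp add: b_def)
  qed
qed

lemma emb_coords_eq_0:
  assumes "\<forall>\<sigma>\<in>E - {\<iota>}. z \<sigma> = 0" "j < d"
  shows "emb_coords z j = 0"
proof (cases "j < r")
  case True
  thus ?thesis using assms(1) \<rho>_in R'_other by (simp add: emb_coords_def)
next
  case False
  hence "(j - r) div 2 < m" using assms(2) d_eq by linarith
  thus ?thesis using False assms(1) \<tau>_in H_other by (simp add: emb_coords_def)
qed

lemma M_carrier: "M \<in> carrier_mat d d"
  unfolding M_def by simp

lemma det_M_nonzero: "det M \<noteq> 0"
proof
  assume "det M = 0"
  hence "det (transpose_mat M) = 0" using det_transpose[OF M_carrier] by simp
  then obtain lv where lv: "lv \<in> carrier_vec d" "lv \<noteq> 0\<^sub>v d" "transpose_mat M *\<^sub>v lv = 0\<^sub>v d"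
    using det_0_iff_vec_prod_zero_field[of "transpose_mat M" d] M_carrier by auto
  define z where "z = coords_emb_fun lv"
  have z: "\<forall>\<sigma>\<in>E. z (conj_emb \<sigma>) = cnj (z \<sigma>)" "\<forall>j<d. emb_coords z j = lv $ j"
    unfolding z_def using coords_emb_fun_conj_emb emb_coords_coords_emb_fun by auto
  have "Re (\<Sum>\<sigma>\<in>E. z \<sigma> * emb_diff \<sigma> l) = 0" if l: "l < d" for l
  proof -
    have "Re (\<Sum>\<sigma>\<in>E. z \<sigma> * emb_diff \<sigma> l) = (\<Sum>j<d. M_entry j l * lv $ j)"
      using sum_emb_diff_eq_M_entry[of z l] z l by simp
    also have "\<dots> = (transpose_mat M *\<^sub>v lv) $ l"
      using l lv(1) by (simp add: M_def scalar_prod_def atLeast0LessThan)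
    finally show ?thesis using lv(3) l by simp
  qed
  hence "\<forall>\<sigma>\<in>E - {\<iota>}. z \<sigma> = 0" using conj_symmetric_vanishing z(1) by blast
  hence "lv $ j = 0" if "j < d" for j
    using emb_coords_eq_0[of z j] z(2) that by simp
  hence "lv = 0\<^sub>v d" using lv(1) by (intro eq_vecI) auto
  thus False using lv(2) by simp
qed

lemma M_invertible: "invertible_mat M"
proof -
  obtain B where "B \<in> carrier_mat d d" "B * M = 1\<^sub>m d" "M * B = 1\<^sub>m d"
    using det_non_zero_imp_unit[OF M_carrier det_M_nonzero, of undefined]
    unfolding Units_def ring_mat_def by auto
  thus ?thesis unfolding invertible_mat_def inverts_mat_def using M_carrier by auto
qed

subsection \<open>The factorization\<close>

lemma surface_value_emb_coords:
  assumes y: "y \<in> K"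
  shows "surface_value r m (vec d (emb_coords (\<lambda>\<sigma>. \<sigma> y))) = (\<Prod>\<sigma>\<in>E - {\<iota>}. cmod (\<sigma> y))"
proof -
  let ?x = "vec d (emb_coords (\<lambda>\<sigma>. \<sigma> y))"
  have "\<bar>\<Prod>j<r. ?x $ j\<bar> = (\<Prod>j<r. cmod (\<rho> j y))"
  proof -
    have "\<bar>Re (\<rho> j y)\<bar> = cmod (\<rho> j y)" if "j < r" for j
      using \<rho>_in[OF that] R'_real y unfolding nf_real_embs_def by (auto simp: cmod_eq_Re)
    thus ?thesis using d_eq by (simp add: abs_prod emb_coords_def)
  qed
  also have "\<dots> = (\<Prod>\<sigma>\<in>R'. cmod (\<sigma> y))"
    using prod.reindex_bij_betw[OF \<rho>_bij, of "\<lambda>\<sigma>. cmod (\<sigma> y)"] by simp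
  finally have real_part: "\<bar>\<Prod>j<r. ?x $ j\<bar> = (\<Prod>\<sigma>\<in>R'. cmod (\<sigma> y))" .
  have "(?x $ (r + 2*i))\<^sup>2 + (?x $ (r + 2*i + 1))\<^sup>2 = cmod (\<tau> i y) * cmod (conj_emb (\<tau> i) y)"
    if "i < m" for i
  proof -
    have "(?x $ (r + 2*i))\<^sup>2 + (?x $ (r + 2*i + 1))\<^sup>2 = (Re (\<tau> i y))\<^sup>2 + (Im (\<tau> i y))\<^sup>2"
      using that d_eq emb_coords_pair[of "\<lambda>\<sigma>. \<sigma> y" i] by simp
    thus ?thesis by (simp add: conj_emb_def cmod_power2 power2_eq_square[symmetric])
  qed
  hence "(\<Prod>i<m. (?x $ (r + 2*i))\<^sup>2 + (?x $ (r + 2*i + 1))\<^sup>2)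
      = (\<Prod>\<sigma>\<in>H. cmod (\<sigma> y) * cmod (conj_emb \<sigma> y))"
    using prod.reindex_bij_betw[OF \<tau>_bij, of "\<lambda>\<sigma>. cmod (\<sigma> y) * cmod (conj_emb \<sigma> y)"] by simp
  thus ?thesis
    unfolding surface_value_def real_part prod_embs_other_split[of "\<lambda>\<sigma>. cmod (\<sigma> y)"] by simp
qed

lemma coeff_unit_nonzero: "u \<in> coeff_units K \<Lambda> \<Longrightarrow> u \<in> K \<and> u \<noteq> 0"
  unfolding coeff_units_def coeff_ring_def by auto

lemma prod_embs_remove_id: "(\<Prod>\<sigma>\<in>E. f \<sigma>) = f \<iota> * (\<Prod>\<sigma>\<in>E - {\<iota>}. f \<sigma>)"
  by (rule prod.remove[OF finite_embs id_emb])

lemma prod_cmod_embs: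
  assumes "x \<in> K"
  shows "(\<Prod>\<sigma>\<in>E. cmod (\<sigma> x)) = \<bar>x\<bar> * (\<Prod>\<sigma>\<in>E - {\<iota>}. cmod (\<sigma> x))"
  unfolding prod_embs_remove_id using id_emb_apply[OF assms] by simp

lemma prod_cmod_other_embs_unit:
  assumes u: "u \<in> coeff_units K \<Lambda>"
  shows "(\<Prod>\<sigma>\<in>E - {\<iota>}. cmod (\<sigma> u)) = 1 / \<bar>u\<bar>"
proof -
  have "1 = (\<Prod>\<sigma>\<in>E. cmod (\<sigma> u))" using cmod_prod_embs_unit[OF u] by (simp add: prod_norm)
  thus ?thesis using prod_cmod_embs coeff_unit_nonzero[OF u] by (simp add: field_simps)
qed

lemma abs_nf_norm: "s \<in> K \<Longrightarrow> \<bar>nf_norm K s\<bar> = \<bar>s\<bar> * (\<Prod>\<sigma>\<in>E - {\<iota>}. cmod (\<sigma> s))"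
  unfolding nf_norm_def using prod_embs_real[of s] prod_cmod_embs
  by (simp add: cmod_eq_Re[symmetric] prod_norm)

lemma nf_trace_eq: "y \<in> K \<Longrightarrow> nf_trace K y = y + Re (\<Sum>\<sigma>\<in>E - {\<iota>}. \<sigma> y)"
  unfolding nf_trace_def sum.remove[OF finite_embs id_emb] using id_emb_apply by simp

lemma dominant_unit_other_embs_le:
  assumes "dominant_unit d K \<Lambda> u" "\<sigma> \<in> E - {\<iota>}"
  shows "cmod (\<sigma> u) \<le> kappa K \<Lambda>"
proof -
  obtain t where t: "t > 1" "t \<le> \<bar>u\<bar>" "\<bar>u\<bar> \<le> kappa K \<Lambda> * t"
    "cmod (\<sigma> u) \<le> kappa K \<Lambda> * t powr (- 1 / real d)"
    using assms unfolding dominant_unit_def by blast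
  have "kappa K \<Lambda> \<ge> 1"
  proof (rule ccontr)
    assume "\<not> kappa K \<Lambda> \<ge> 1"
    hence "kappa K \<Lambda> * t < t" using t(1) by simp
    thus False using t(2,3) by simp
  qed
  moreover have "t powr (- 1 / real d) \<le> 1"
    using t(1) by (simp add: powr_minus_divide powr_minus divide_simps ge_one_powr_ge_zero)
  ultimately have "kappa K \<Lambda> * t powr (- 1 / real d) \<le> kappa K \<Lambda>" by (simp add: mult_left_le)
  thus ?thesis using t(4) by simp
qed

text \<open>Tr(s u) = s u + \<Sum>_{\<sigma> \<noteq> id} \<sigma>(s) \<sigma>(u), and for dominant u the \<sigma>(u) are bounded by \<kappa>.\<close>

lemma trace_div_unit_bound:
  assumes s: "s \<in> K" and u: "u \<in> K" "u \<noteq> 0"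
    and bound: "\<And>\<sigma>. \<sigma> \<in> E - {\<iota>} \<Longrightarrow> cmod (\<sigma> u) \<le> \<kappa>"
  shows "\<bar>nf_trace K (s * u) / u - s\<bar> \<le> \<kappa> * (\<Sum>\<sigma>\<in>E - {\<iota>}. cmod (\<sigma> s)) / \<bar>u\<bar>"
proof -
  have "\<bar>nf_trace K (s * u) / u - s\<bar> = \<bar>Re (\<Sum>\<sigma>\<in>E - {\<iota>}. \<sigma> (s * u))\<bar> / \<bar>u\<bar>"
    unfolding nf_trace_eq[OF K_mult[OF s u(1)]] using u(2) by (simp add: field_simps abs_divide)
  also have "\<dots> \<le> \<kappa> * (\<Sum>\<sigma>\<in>E - {\<iota>}. cmod (\<sigma> s)) / \<bar>u\<bar>"
  proof (rule divide_right_mono)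
    have "\<bar>Re (\<Sum>\<sigma>\<in>E - {\<iota>}. \<sigma> (s * u))\<bar> \<le> (\<Sum>\<sigma>\<in>E - {\<iota>}. cmod (\<sigma> (s * u)))"
      using abs_Re_le_cmod norm_sum order_trans by blast
    also have "\<dots> \<le> (\<Sum>\<sigma>\<in>E - {\<iota>}. cmod (\<sigma> s) * \<kappa>)"
      using bound by (intro sum_mono) (auto simp: emb_mult[OF _ s u(1)] norm_mult mult_left_mono)
    finally show "\<bar>Re (\<Sum>\<sigma>\<in>E - {\<iota>}. \<sigma> (s * u))\<bar> \<le> \<kappa> * (\<Sum>\<sigma>\<in>E - {\<iota>}. cmod (\<sigma> s))"
      by (simp add: sum_distrib_left mult.commute)
  qed simp
  finally show ?thesis .
qed

lemma trace_div_dominant_unit_tendsto: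
  assumes s: "s \<in> K"
    and dom: "\<forall>k. dominant_unit d K \<Lambda> (us k)" and inf: "filterlim (\<lambda>k. \<bar>us k\<bar>) at_top sequentially"
  shows "(\<lambda>k. nf_trace K (s * us k) / us k) \<longlonglongrightarrow> s"
proof -
  define C where "C = kappa K \<Lambda> * (\<Sum>\<sigma>\<in>E - {\<iota>}. cmod (\<sigma> s))"
  have "(\<lambda>k. nf_trace K (s * us k) / us k - s) \<longlonglongrightarrow> 0"
  proof (rule tendsto_0_le)
    show "(\<lambda>k. C / \<bar>us k\<bar>) \<longlonglongrightarrow> 0"
      by (rule tendsto_divide_0[OF tendsto_const filterlim_at_top_imp_at_infinity[OF inf]])
    have "norm (nf_trace K (s * us k) / us k - s) \<le> norm (C / \<bar>us k\<bar>) * 1" for k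
    proof -
      have "us k \<in> K" "us k \<noteq> 0"
        using dom coeff_unit_nonzero unfolding dominant_unit_def by blast+
      hence "norm (nf_trace K (s * us k) / us k - s) \<le> C / \<bar>us k\<bar>"
        unfolding C_def using trace_div_unit_bound[OF s] dominant_unit_other_embs_le dom by simp
      hence "norm (nf_trace K (s * us k) / us k - s) \<le> norm (C / \<bar>us k\<bar>)"
        by (rule order_trans) (simp add: divide_right_mono)
      thus ?thesis by simp
    qed
    thus "\<forall>\<^sub>F k in sequentially. norm (nf_trace K (s * us k) / us k - s) \<le> norm (C / \<bar>us k\<bar>) * 1"
      by (intro always_eventually allI)
  qed
  thus ?thesis by (simp add: LIM_zero_iff)
qed

lemma nf_trace_0: "nf_trace K 0 = 0"
  unfolding nf_trace_def by (simp add: emb_0)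

lemma nf_norm_0: "nf_norm K 0 = 0"
  unfolding nf_norm_def prod_embs_remove_id using id_emb_apply[OF K_0] by simp

context
  fixes s :: real
  assumes s: "s \<in> K" "s \<noteq> 0"
begin

definition other_conj_prod :: "real \<Rightarrow> real" where
  "other_conj_prod u = (\<Prod>\<sigma>\<in>E - {\<iota>}. cmod (\<sigma> (s * u)))"

definition \<beta> :: "real \<Rightarrow> real vec" where
  "\<beta> u = (1 / other_conj_prod u powr (1 / real d)) \<cdot>\<^sub>v vec d (emb_coords (\<lambda>\<sigma>. \<sigma> (s * u)))"

definition \<gamma> :: "real \<Rightarrow> real" where
  "\<gamma> u = (\<bar>nf_trace K (s * u)\<bar> * other_conj_prod u) powr (1 / real d)"

lemma other_conj_prod_pos: "u \<in> coeff_units K \<Lambda> \<Longrightarrow> other_conj_prod u > 0"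
  unfolding other_conj_prod_def using emb_nonzero[of _ "s * u"] K_mult[OF s(1)] s(2) coeff_unit_nonzero
  by (intro prod_pos) auto

lemma \<beta>_on_surface: "u \<in> coeff_units K \<Lambda> \<Longrightarrow> on_surface r m (\<beta> u)"
  using on_surface_normalize[of "vec d (emb_coords (\<lambda>\<sigma>. \<sigma> (s * u)))" r m]
    surface_value_emb_coords[OF K_mult[OF s(1)]] coeff_unit_nonzero other_conj_prod_pos
  unfolding \<beta>_def other_conj_prod_def d_eq[symmetric] by simp

lemma \<gamma>_\<beta>_eq:
  assumes u: "u \<in> coeff_units K \<Lambda>" and i: "i < d"
  shows "\<bar>nf_trace K (s * u)\<bar> powr (1 / real d) *
           (nf_trace K (s * u) * \<alpha> (i + 1) - nf_trace K (s * u * \<alpha> (i + 1)))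
         = \<gamma> u * ((transpose_mat M *\<^sub>v \<beta> u) $ i)"
proof -
  have su: "s * u \<in> K" using coeff_unit_nonzero[OF u] K_mult[OF s(1)] by simp
  have "(transpose_mat M *\<^sub>v \<beta> u) $ i
      = (1 / other_conj_prod u powr (1 / real d)) * (nf_trace K (s * u) * \<alpha> (i + 1) - nf_trace K (s * u * \<alpha> (i + 1)))"
    using M_carrier i by (simp add: \<beta>_def mult_mat_vec M_transpose_emb_coords[OF su i])
  thus ?thesis
    using other_conj_prod_pos[OF u] by (simp add: \<gamma>_def powr_mult other_conj_prod_def)
qed

lemma \<gamma>_tendsto:
  assumes dom: "\<forall>k. dominant_unit d K \<Lambda> (us k)" and inf: "filterlim (\<lambda>k. \<bar>us k\<bar>) at_top sequentially"
  shows "(\<lambda>k. \<gamma> (us k)) \<longlonglongrightarrow> \<bar>nf_norm K s\<bar> powr (1 / real d)"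
proof -
  define P where "P = (\<Prod>\<sigma>\<in>E - {\<iota>}. cmod (\<sigma> s))"
  have "\<bar>nf_trace K (s * us k)\<bar> * other_conj_prod (us k) = \<bar>nf_trace K (s * us k) / us k\<bar> * P" for k
  proof -
    have u: "us k \<in> coeff_units K \<Lambda>" using dom unfolding dominant_unit_def by blast
    have "other_conj_prod (us k) = P * (1 / \<bar>us k\<bar>)"
      unfolding other_conj_prod_def P_def prod_cmod_other_embs_unit[OF u, symmetric] prod.distrib[symmetric]
      using coeff_unit_nonzero[OF u] s(1) by (intro prod.cong) (auto simp: emb_mult norm_mult)
    thus ?thesis by (simp add: abs_divide)
  qed
  moreover have "(\<lambda>k. \<bar>nf_trace K (s * us k) / us k\<bar> * P) \<longlonglongrightarrow> \<bar>nf_norm K s\<bar>"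
    unfolding abs_nf_norm[OF s(1)] P_def
    by (intro tendsto_intros trace_div_dominant_unit_tendsto[OF s(1) dom inf])
  moreover have "\<bar>nf_norm K s\<bar> \<noteq> 0"
    unfolding abs_nf_norm[OF s(1)] using s emb_nonzero finite_embs by (auto simp: prod_zero_iff)
  ultimately show ?thesis unfolding \<gamma>_def by (auto intro: tendsto_powr)
qed

end

lemma exists_surface_factorization:
  assumes s: "s \<in> K"
  shows "\<exists>(\<gamma> :: real \<Rightarrow> real) (\<beta> :: real \<Rightarrow> real vec).
        (\<forall>u\<in>coeff_units K \<Lambda>.
           \<beta> u \<in> carrier_vec d \<and> on_surface r m (\<beta> u) \<and>
           (\<forall>i<d. \<bar>nf_trace K (s * u)\<bar> powr (1 / real d) *
                    (nf_trace K (s * u) * \<alpha> (i + 1) - nf_trace K (s * u * \<alpha> (i + 1)))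
                  = \<gamma> u * ((transpose_mat M *\<^sub>v \<beta> u) $ i))) \<and>
        (\<forall>us :: nat \<Rightarrow> real.
           (\<forall>k. dominant_unit d K \<Lambda> (us k)) \<and> filterlim (\<lambda>k. \<bar>us k\<bar>) at_top sequentially
           \<longrightarrow> (\<lambda>k. \<gamma> (us k)) \<longlonglongrightarrow> \<bar>nf_norm K s\<bar> powr (1 / real d))"
proof (cases "s = 0")
  case True
  txt \<open>Both sides of the equation vanish, so any point of the surface will do.\<close>
  define p where "p = vec d (\<lambda>j. if j < r \<or> even (j - r) then 1 else (0::real))"
  have "on_surface r m p" using on_surface_exists[of r m] unfolding p_def d_eq[symmetric] .
  thus ?thesis using True by (intro exI[of _ "\<lambda>_. 0"] exI[of _ "\<lambda>_. p"]) (simp add: p_def nf_trace_0 nf_norm_0)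
next
  case False
  thus ?thesis using s \<beta>_on_surface \<gamma>_\<beta>_eq \<gamma>_tendsto
    by (intro exI[of _ "\<gamma> s"] exI[of _ "\<beta> s"]) (auto simp: \<beta>_def)
qed

end

theorem lemma11:
  fixes d :: nat and \<alpha> :: "nat \<Rightarrow> real"
  defines "K \<equiv> nf_K d \<alpha>"
      and "\<Lambda> \<equiv> nf_lattice d \<alpha>"
      and "r \<equiv> card (nf_real_embs (nf_K d \<alpha>)) - 1"
      and "m \<equiv> card (nf_nonreal_embs (nf_K d \<alpha>)) div 2"
  assumes basis: "nf_basis d \<alpha>"
  shows "\<exists>M :: real mat. M \<in> carrier_mat d d \<and> invertible_mat M \<and>
    (\<forall>s\<in>nf_dual K \<Lambda>.
      \<exists>(\<gamma> :: real \<Rightarrow> real) (\<beta> :: real \<Rightarrow> real vec).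
        (\<forall>u\<in>coeff_units K \<Lambda>.
           \<beta> u \<in> carrier_vec d \<and> on_surface r m (\<beta> u) \<and>
           (\<forall>i<d. \<bar>nf_trace K (s * u)\<bar> powr (1 / real d) *
                    (nf_trace K (s * u) * \<alpha> (i + 1) - nf_trace K (s * u * \<alpha> (i + 1)))
                  = \<gamma> u * ((transpose_mat M *\<^sub>v \<beta> u) $ i))) \<and>
        (\<forall>useq :: nat \<Rightarrow> real.
           (\<forall>n. dominant_unit d K \<Lambda> (useq n)) \<and> filterlim (\<lambda>n. \<bar>useq n\<bar>) at_top sequentially
           \<longrightarrow> (\<lambda>n. \<gamma> (useq n)) \<longlonglongrightarrow> \<bar>nf_norm K s\<bar> powr (1 / real d)))"
proof -
  interpret real_number_field d \<alpha> by unfold_locales (rule basis)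
  have "s \<in> nf_K d \<alpha>" if "s \<in> nf_dual K \<Lambda>" for s
    using that unfolding nf_dual_def K_def by auto
  thus ?thesis
    unfolding K_def \<Lambda>_def r_def m_def
    using M_carrier M_invertible exists_surface_factorization by blast
qed

end
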